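(* Let $\mathcal{H}$ be a real Hilbert space, $N\ge2$, $\theta\in(0,1)$, and $\Gamma\subseteq\mathbb{R}_{++}$ a nonempty closed interval. Suppose one of the following holds: (a) $A_1,\dots,A_{N-1}:\mathcal{H}\to\mathcal{H}$ are monotone and $L$-Lipschitz, and $A_N:\mathcal{H}\rightrightarrows\mathcal{H}$ is maximally $\mu$-strongly monotone; (b) $A_1,\dots,A_{N-1}:\mathcal{H}\to\mathcal{H}$ are maximally $\mu$-strongly monotone and $L$-Lipschitz, and $A_N:\mathcal{H}\rightrightarrows\mathcal{H}$ is maximally monotone. Assume $\operatorname{zer}(\sum_{i=1}^NA_i)\neq\emptyset$, let $(\gamma_n)_{n\in\mathbb{N}}\subseteq\Gamma$ converge $R$-linearly to $\gamma^*\in\Gamma$, and let $T_\gamma$ be the Malitsky--Tam operator (context). Given $\mathbf{x}_0=(x_0^1,\dots,x_0^{N-1})\in\mathcal{H}^{N-1}$, generate $(\mathbf{x}_n),(\mathbf{w}_n)\subseteq\mathcal{H}^{N-1}$ and $(\mathbf{z}_n)=((z_n^1,\dots,z_n^N))\subseteq\mathcal{H}^N$ by the relocated resolvent splitting algorithm described in the context. Then: (i) $(\mathbf{x}_n)$ and $(\mathbf{w}_n)$ converge $R$-linearly to the same point $\mathbf{x}=(x^1,\dots,x^{N-1})\in\operatorname{Fix}T_{\gamma^*}$; (ii) $(\mathbf{z}_n)$ converges $R$-linearly to $(z,\dots,z)\in\mathcal{H}^N$, where $z:=J_{\gamma^*A_1}x^1\in\operatorname{zer}(\sum_{i=1}^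NA_i)$.
   Context: $J_A=(\mathrm{Id}+A)^{-1}$; $\operatorname{zer}A=\{x:0\in Ax\}$; $\operatorname{Fix}T=\{x:Tx=x\}$; $\mu$-strongly monotone means $\langle x-y,u-v\rangle\ge\mu\|x-y\|^2$ on the graph. Malitsky--Tam operator: for $\mathbf{x}=(x^1,\dots,x^{N-1})$, $z^1=J_{\gamma A_1}x^1$, $z^i=J_{\gamma A_i}(z^{i-1}+x^i-x^{i-1})$ ($i=2,\dots,N-1$), $z^N=J_{\gamma A_N}(z^1+z^{N-1}-x^{N-1})$, $T_\gamma\mathbf{x}=\mathbf{x}+\theta(z^2-z^1,\dots,z^N-z^{N-1})$. Relocated algorithm: set $z_0^1=J_{\gamma_0A_1}x_0^1$. For $n=0,1,\dots$: compute $z_n^i=J_{\gamma_nA_i}(x_n^i+z_n^{i-1}-x_n^{i-1})$ for $i=2,\dots,N-1$ and $z_n^N=J_{\gamma_nA_N}(z_n^1+z_n^{N-1}-x_n^{N-1})$; set $\mathbf{w}_n=\mathbf{x}_n+\theta(z_n^2-z_n^1,\dots,z_n^N-z_n^{N-1})$; then $z_{n+1}^1=J_{\gamma_nA_1}w_n^1$, $x_{n+1}^1=\frac{\gamma_{n+1}}{\gamma_n}w_n^1+(1-\frac{\gamma_{n+1}}{\gamma_n})z_{n+1}^1$, and $x_{n+1}^i=\frac{\gamma_{n+1}}{\gamma_n}(w_n^i-w_n^1)+x_{n+1}^1$ for $i=2,\dots,N-1$. A sequence converges $R$-linearly to $a$ if $\|a_n-a\|\le Cr^n$ for some $C\ge0$,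 $r\in(0,1)$. *)

theory Defs
  imports "HOL-Analysis.Analysis"
begin

definition monotone_op :: "('a::real_inner \<Rightarrow> 'a set) \<Rightarrow> bool" where
  "monotone_op A \<longleftrightarrow> (\<forall>x y u v. u \<in> A x \<longrightarrow> v \<in> A y \<longrightarrow> inner (x - y) (u - v) \<ge> 0)"

definition strongly_monotone_op :: "real \<Rightarrow> ('a::real_inner \<Rightarrow> 'a set) \<Rightarrow> bool" where
  "strongly_monotone_op \<mu> A \<longleftrightarrow>
     (\<forall>x y u v. u \<in> A x \<longrightarrow> v \<in> A y \<longrightarrow> inner (x - y) (u - v) \<ge> \<mu> * (norm (x - y))\<^sup>2)"

definition maximally_monotone_op :: "('a::real_inner \<Rightarrow> 'a set) \<Rightarrow> bool" where
  "maximally_monotone_op A \<longleftrightarrow> monotone_op A \<and>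
     (\<forall>B. monotone_op B \<and> (\<forall>x. A x \<subseteq> B x) \<longrightarrow> B = A)"

definition sv :: "('a \<Rightarrow> 'a) \<Rightarrow> 'a \<Rightarrow> 'a set" where
  "sv f = (\<lambda>x. {f x})"

(* resolvent J_{g A} = (Id + g A)^{-1}, as a function (single-valued for maximally monotone A, g > 0) *)
definition resolvent :: "real \<Rightarrow> ('a::real_vector \<Rightarrow> 'a set) \<Rightarrow> 'a \<Rightarrow> 'a" where
  "resolvent g A y = (THE x. \<exists>u \<in> A x. y = x + g *\<^sub>R u)"

definition zer :: "('a::zero \<Rightarrow> 'a set) \<Rightarrow> 'a set" where
  "zer A = {x. 0 \<in> A x}"

definition opsum :: "nat \<Rightarrow> (nat \<Rightarrow> 'a \<Rightarrow> 'a set) \<Rightarrow> 'a::comm_monoid_add \<Rightarrow> 'a set" where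
  "opsum N A x = {(\<Sum>i=1..N. u i) | u. \<forall>i\<in>{1..N}. u i \<in> A i x}"

definition ops :: "nat \<Rightarrow> (nat \<Rightarrow> 'a \<Rightarrow> 'a) \<Rightarrow> ('a \<Rightarrow> 'a set) \<Rightarrow> nat \<Rightarrow> 'a \<Rightarrow> 'a set" where
  "ops N F B i = (if i = N then B else sv (F i))"

(* Malitsky--Tam operator. Vectors of H^{N-1} (resp. H^N) are functions nat \<Rightarrow> 'a,
   only indices 1..N-1 (resp. 1..N) being relevant. *)
fun mt_zz :: "(nat \<Rightarrow> 'a::real_vector \<Rightarrow> 'a set) \<Rightarrow> real \<Rightarrow> (nat \<Rightarrow> 'a) \<Rightarrow> nat \<Rightarrow> 'a" where
  "mt_zz A g x 0 = 0"
| "mt_zz A g x (Suc 0) = resolvent g (A 1) (x 1)"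
| "mt_zz A g x (Suc (Suc i)) =
     resolvent g (A (Suc (Suc i))) (mt_zz A g x (Suc i) + x (Suc (Suc i)) - x (Suc i))"

definition mt_z :: "nat \<Rightarrow> (nat \<Rightarrow> 'a::real_vector \<Rightarrow> 'a set) \<Rightarrow> real \<Rightarrow> (nat \<Rightarrow> 'a) \<Rightarrow> nat \<Rightarrow> 'a" where
  "mt_z N A g x i = (if i = N
      then resolvent g (A N) (mt_zz A g x 1 + mt_zz A g x (N - 1) - x (N - 1))
      else mt_zz A g x i)"

definition mt_op :: "nat \<Rightarrow> (nat \<Rightarrow> 'a::real_vector \<Rightarrow> 'a set) \<Rightarrow> real \<Rightarrow> real \<Rightarrow> (nat \<Rightarrow> 'a) \<Rightarrow> nat \<Rightarrow> 'a" where
  "mt_op N A g \<theta> x = (\<lambda>i. if i \<in> {1..N-1}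
      then x i + \<theta> *\<^sub>R (mt_z N A g x (Suc i) - mt_z N A g x i) else x i)"

definition mt_fix :: "nat \<Rightarrow> (nat \<Rightarrow> 'a::real_vector \<Rightarrow> 'a set) \<Rightarrow> real \<Rightarrow> real \<Rightarrow> (nat \<Rightarrow> 'a) set" where
  "mt_fix N A g \<theta> = {x. \<forall>i\<in>{1..N-1}. mt_op N A g \<theta> x i = x i}"

definition rlinear_real :: "(nat \<Rightarrow> real) \<Rightarrow> real \<Rightarrow> bool" where
  "rlinear_real a l \<longleftrightarrow> (\<exists>C r. C \<ge> 0 \<and> 0 < r \<and> r < 1 \<and> (\<forall>n. \<bar>a n - l\<bar> \<le> C * r ^ n))"

definition rlinear_vec :: "nat set \<Rightarrow> (nat \<Rightarrow> nat \<Rightarrow> 'a::real_normed_vector) \<Rightarrow> (nat \<Rightarrow> 'a) \<Rightarrow> bool" where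
  "rlinear_vec I a l \<longleftrightarrow> (\<exists>C r. C \<ge> 0 \<and> 0 < r \<and> r < 1 \<and>
      (\<forall>n. sqrt (\<Sum>i\<in>I. (norm (a n i - l i))\<^sup>2) \<le> C * r ^ n))"

end

theory Submission
  imports Defs
begin

lemma monotone_opD:
  "monotone_op A \<Longrightarrow> u \<in> A x \<Longrightarrow> v \<in> A y \<Longrightarrow> 0 \<le> inner (x - y) (u - v)"
  unfolding monotone_op_def by blast

lemma strongly_monotone_opD:
  "strongly_monotone_op \<mu> A \<Longrightarrow> u \<in> A x \<Longrightarrow> v \<in> A y \<Longrightarrow> \<mu> * (norm (x - y))\<^sup>2 \<le> inner (x - y) (u - v)"
  unfolding strongly_monotone_op_def by blast

lemma maximally_monotone_op_imp_monotone: "maximally_monotone_op A \<Longrightarrow> monotone_op A"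
  unfolding maximally_monotone_op_def by blast

lemma maximally_monotone_op_memI:
  assumes max: "maximally_monotone_op A"
    and related: "\<And>z v. v \<in> A z \<Longrightarrow> 0 \<le> inner (x - z) (u - v)"
  shows "u \<in> A x"
proof -
  define A' where "A' = A(x := insert u (A x))"
  have "monotone_op A'"
    unfolding monotone_op_def
  proof (intro allI impI)
    fix x1 x2 u1 u2 assume "u1 \<in> A' x1" "u2 \<in> A' x2"
    then consider "u1 \<in> A x1" "u2 \<in> A x2" | "x1 = x" "u1 = u" "u2 \<in> A x2"
      | "x2 = x" "u2 = u" "u1 \<in> A x1" | "x1 = x" "u1 = u" "x2 = x" "u2 = u"
      unfolding A'_def by (auto split: if_splits)
    then show "0 \<le> inner (x1 - x2) (u1 - u2)"
    proof cases
      case 1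
      then show ?thesis using max by (blast dest: maximally_monotone_op_imp_monotone monotone_opD)
    next
      case 3
      then show ?thesis using related[of u1 x1] by (simp add: inner_diff_left inner_diff_right)
    qed (use related in auto)
  qed
  moreover have "\<forall>z. A z \<subseteq> A' z" unfolding A'_def by auto
  ultimately have "A' = A" using max unfolding maximally_monotone_op_def by blast
  then show ?thesis unfolding A'_def by (metis fun_upd_same insertI1)
qed

lemma maximally_monotone_op_sv:
  fixes F :: "'a::real_inner \<Rightarrow> 'a"
  assumes mono: "monotone_op (sv F)" and cont: "continuous_on UNIV F"
  shows "maximally_monotone_op (sv F)"
  unfolding maximally_monotone_op_def
proof (intro conjI allI impI mono)
  fix B assume B: "monotone_op B \<and> (\<forall>x. sv F x \<subseteq> B x)"
  have "u = F x" if u: "u \<in> B x" for x u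
  proof -
    define h where "h = F x - u"
    define y where "y t = x - t *\<^sub>R h" for t :: real
    have pos: "0 \<le> inner h (u - F (y t))" if "t > 0" for t
    proof -
      have "F (y t) \<in> B (y t)" using B unfolding sv_def by blast
      then have "0 \<le> inner (x - y t) (u - F (y t))" using B u by (blast dest: monotone_opD)
      then show ?thesis using that by (simp add: y_def zero_le_mult_iff)
    qed
    have "\<forall>\<^sub>F t in at_right 0. 0 \<le> inner h (u - F (y t))"
      using eventually_at_right_less[of "0::real"] pos by (auto elim: eventually_mono)
    moreover have "(y \<longlongrightarrow> x) (at_right 0)"
      unfolding y_def by (auto intro!: tendsto_eq_intros)
    then have "((\<lambda>t. inner h (u - F (y t))) \<longlongrightarrow> inner h (u - F x)) (at_right 0)"
      by (intro tendsto_intros continuous_on_tendsto_compose[OF cont]) auto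
    ultimately have "0 \<le> inner h (u - F x)"
      by (intro tendsto_lowerbound) auto
    then have "inner h h \<le> 0" unfolding h_def by (simp add: inner_diff_right inner_commute)
    then have "h = 0" by (meson inner_eq_zero_iff inner_ge_zero order_antisym)
    then show ?thesis unfolding h_def by simp
  qed
  then show "B = sv F" using B by (fastforce simp: sv_def)
qed

lemma inner_diff_diff_midpoint:
  fixes x a b :: "'a::real_inner"
  shows "inner (x - a) (x - b) = (norm (x - midpoint a b))\<^sup>2 - (dist a b / 2)\<^sup>2"
  by (simp add: midpoint_def dist_norm power2_norm_eq_inner inner_diff_left inner_diff_right
      inner_add_left inner_add_right inner_commute field_simps)

lemma inner_diff_diff_nonpos_iff:
  fixes x a b :: "'a::real_inner"
  shows "inner (x - a) (x - b) \<le> 0 \<longleftrightarrow> x \<in> cball (midpoint a b) (dist a b / 2)"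
  by (simp add: inner_diff_diff_midpoint dist_norm norm_minus_commute power_mono_iff)

lemma continuous_on_Min_finite:
  fixes f :: "'i \<Rightarrow> 'a::topological_space \<Rightarrow> 'b::linorder_topology"
  assumes "finite P" "P \<noteq> {}" "\<And>p. p \<in> P \<Longrightarrow> continuous_on S (f p)"
  shows "continuous_on S (\<lambda>x. Min ((\<lambda>p. f p x) ` P))"
  using assms by (induction P rule: finite_ne_induct) (auto intro: continuous_on_min)

lemma antimonotone_pairs_weighted_midpoint:
  fixes Q :: "('a::real_inner \<times> 'a) set" and u :: "'a \<times> 'a \<Rightarrow> real"
  assumes fin: "finite Q" and u0: "\<And>q. q \<in> Q \<Longrightarrow> 0 \<le> u q" and u1: "sum u Q = 1"
    and anti: "\<And>p q. p \<in> Q \<Longrightarrow> q \<in> Q \<Longrightarrow> inner (fst p - fst q) (snd p - snd q) \<le> 0"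
  defines "x \<equiv> midpoint (\<Sum>q\<in>Q. u q *\<^sub>R fst q) (\<Sum>q\<in>Q. u q *\<^sub>R snd q)"
  shows "(\<Sum>q\<in>Q. u q * inner (x - fst q) (x - snd q)) \<le> 0"
proof -
  define a where "a = (\<Sum>q\<in>Q. u q *\<^sub>R fst q)"
  define b where "b = (\<Sum>q\<in>Q. u q *\<^sub>R snd q)"
  define S where "S = (\<Sum>q\<in>Q. u q * inner (fst q) (snd q))"
  have row: "(\<Sum>q\<in>Q. u p * u q * inner (fst p - fst q) (snd p - snd q))
      = u p * inner (fst p) (snd p) - u p * inner (fst p) b - u p * inner a (snd p) + u p * S" for p
    by (simp add: a_def b_def S_def inner_diff_left inner_diff_right inner_sum_left inner_sum_right
        sum_subtractf sum.distrib sum_distrib_left algebra_simps flip: sum_distrib_right)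
       (simp add: u1 flip: sum_distrib_left)
  have "(\<Sum>p\<in>Q. u p * inner (fst p) b) = inner a b" unfolding a_def inner_sum_left by simp
  moreover have "(\<Sum>p\<in>Q. u p * inner a (snd p)) = inner a b" unfolding b_def inner_sum_right by simp
  ultimately have "2 * (S - inner a b) = (\<Sum>p\<in>Q. \<Sum>q\<in>Q. u p * u q * inner (fst p - fst q) (snd p - snd q))"
    unfolding row by (simp add: S_def sum_subtractf sum.distrib u1 flip: sum_distrib_right)
  also have "\<dots> \<le> 0"
    by (intro sum_nonpos) (simp add: anti u0 mult_nonneg_nonpos)
  finally have "S \<le> inner a b" by simp
  have "(\<Sum>q\<in>Q. u q * inner (x - fst q) (x - snd q)) = inner (x - a) (x - b) + (S - inner a b)"
    by (simp add: a_def b_def S_def inner_diff_left inner_diff_right inner_sum_left inner_sum_right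
        sum_subtractf sum.distrib sum_distrib_left algebra_simps u1 flip: sum_distrib_right)
  also have "inner (x - a) (x - b) = - (dist a b / 2)\<^sup>2"
    by (simp add: inner_diff_diff_midpoint x_def a_def b_def)
  finally show ?thesis using \<open>S \<le> inner a b\<close> zero_le_power2[of "dist a b / 2"] by linarith
qed

lemma max_min_concave_quadratics_in_active_hull:
  fixes m :: "'i \<Rightarrow> 'a::real_inner" and k :: "'i \<Rightarrow> real"
  defines "h \<equiv> \<lambda>p y. k p - (norm (y - m p))\<^sup>2"
  assumes fin: "finite P" and ne: "P \<noteq> {}" and K: "convex K" "m ` P \<subseteq> K" and x: "x \<in> K"
    and max: "\<And>y. y \<in> K \<Longrightarrow> Min ((\<lambda>p. h p y) ` P) \<le> Min ((\<lambda>p. h p x) ` P)"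
  shows "x \<in> convex hull (m ` {p\<in>P. h p x = Min ((\<lambda>p. h p x) ` P)})"
proof (rule ccontr)
  define M where "M = Min ((\<lambda>p. h p x) ` P)"
  define I where "I = {p\<in>P. h p x = M}"
  define H where "H = convex hull (m ` I)"
  assume "x \<notin> convex hull (m ` {p\<in>P. h p x = Min ((\<lambda>p. h p x) ` P)})"
  then have xH: "x \<notin> H" unfolding H_def I_def M_def .
  have M_le: "M \<le> h p x" if "p \<in> P" for p unfolding M_def using fin that by simp
  have "M \<in> (\<lambda>p. h p x) ` P" unfolding M_def using fin ne by (intro Min_in) auto
  then have "H \<noteq> {}" unfolding H_def I_def by auto
  moreover have "compact H" unfolding H_def I_def using fin by (intro finite_imp_compact_convex_hull) simp
  ultimately obtain c where c: "c \<in> H" "\<forall>y\<in>H. dist x c \<le> dist x y"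
    using continuous_attains_inf continuous_on_dist[OF continuous_on_const continuous_on_id] by metis
  have HK: "H \<subseteq> K" unfolding H_def I_def using K by (intro hull_minimal) auto
  define d where "d = c - x"
  have "d \<noteq> 0" using c xH unfolding d_def by auto
  then have dd: "0 < inner d d" by simp
  have along: "h p (x + t *\<^sub>R d) = h p x - 2 * t * inner (x - m p) d - t\<^sup>2 * inner d d" for p t
    unfolding h_def power2_norm_eq_inner
    by (simp add: inner_diff_left inner_diff_right inner_add_left inner_add_right inner_commute
        algebra_simps power2_eq_square)
  have "\<forall>\<^sub>F t in at_right 0. M < h p (x + t *\<^sub>R d)" if p: "p \<in> P" for p
  proof (cases "p \<in> I")
    case True
    then have "m p \<in> H" unfolding H_def by (simp add: hull_inc)
    then have "inner (x - c) (m p - c) \<le> 0"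
      using any_closest_point_dot[of H c "m p" x] c \<open>compact H\<close> unfolding H_def
      by (auto simp: compact_imp_closed)
    then have "inner (x - m p) d \<le> - inner d d"
      by (simp add: d_def inner_diff_left inner_diff_right inner_commute algebra_simps)
    then have "M < h p (x + t *\<^sub>R d)" if "0 < t" "t < 1" for t
    proof -
      have "2 * t * inner (x - m p) d \<le> 2 * t * (- inner d d)"
        using \<open>inner (x - m p) d \<le> - inner d d\<close> that by (intro mult_left_mono) auto
      moreover have "0 < t * (2 - t) * inner d d" using that dd by simp
      ultimately show ?thesis
        unfolding along using True by (simp add: I_def power2_eq_square algebra_simps)
    qed
    then show ?thesis
      unfolding eventually_at_right_field by (intro exI[of _ 1]) auto
  next
    case False
    then have "M < h p x" using M_le[OF p] p unfolding I_def by auto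
    moreover have "((\<lambda>t. h p (x + t *\<^sub>R d)) \<longlongrightarrow> h p (x + 0 *\<^sub>R d)) (at_right 0)"
      unfolding h_def by (intro tendsto_intros)
    ultimately show ?thesis by (intro order_tendstoD(1)) auto
  qed
  then have "\<forall>\<^sub>F t in at_right 0. \<forall>p\<in>P. M < h p (x + t *\<^sub>R d)"
    using fin by (simp add: eventually_ball_finite)
  then obtain b where b: "0 < b" "\<And>t. 0 < t \<Longrightarrow> t < b \<Longrightarrow> \<forall>p\<in>P. M < h p (x + t *\<^sub>R d)"
    unfolding eventually_at_right_field by auto
  define t where "t = min (b / 2) (1 / 2)"
  have t: "0 < t" "t < 1" "\<forall>p\<in>P. M < h p (x + t *\<^sub>R d)" using b unfolding t_def by auto
  have "x + t *\<^sub>R d = (1 - t) *\<^sub>R x + t *\<^sub>R c" by (simp add: d_def algebra_simps)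
  then have "x + t *\<^sub>R d \<in> K" using K(1) x c(1) HK t by (auto intro: convexD_alt)
  moreover have "M < Min ((\<lambda>p. h p (x + t *\<^sub>R d)) ` P)" using fin ne t(3) by simp
  ultimately show False using max unfolding M_def by fastforce
qed

lemma antimonotone_pairs_common_point:
  fixes P :: "('a::real_inner \<times> 'a) set"
  assumes fin: "finite P"
    and anti: "\<And>p q. p \<in> P \<Longrightarrow> q \<in> P \<Longrightarrow> inner (fst p - fst q) (snd p - snd q) \<le> 0"
  shows "\<exists>x. \<forall>p\<in>P. inner (x - fst p) (x - snd p) \<le> 0"
proof (cases "P = {}")
  case False
  define m where "m p = midpoint (fst p) (snd p)" for p :: "'a \<times> 'a"
  define k where "k p = (dist (fst p) (snd p) / 2)\<^sup>2" for p :: "'a \<times> 'a"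
  define f where "f y = Min ((\<lambda>p. k p - (norm (y - m p))\<^sup>2) ` P)" for y
  have h_eq: "k p - (norm (y - m p))\<^sup>2 = - inner (y - fst p) (y - snd p)" for p y
    by (simp add: k_def m_def inner_diff_diff_midpoint)
  define K where "K = convex hull (m ` P)"
  have "compact K" "K \<noteq> {}" unfolding K_def using fin False by (auto intro: finite_imp_compact_convex_hull)
  moreover have "continuous_on K f"
    unfolding f_def using fin False by (intro continuous_on_Min_finite continuous_intros)
  ultimately obtain x where x: "x \<in> K" "\<forall>y\<in>K. f y \<le> f x" using continuous_attains_sup by metis
  define I where "I = {p\<in>P. k p - (norm (x - m p))\<^sup>2 = f x}"
  have x_hull: "x \<in> convex hull (m ` I)"
    unfolding I_def f_def
    by (rule max_min_concave_quadratics_in_active_hull[OF fin False convex_convex_hull hull_subset x(1)[unfolded K_def]])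
      (use x in \<open>auto simp: f_def K_def\<close>)
  have "linear m" unfolding m_def midpoint_def by (intro linearI) (auto simp: algebra_simps)
  then have "x \<in> m ` (convex hull I)" using x_hull by (simp add: convex_hull_linear_image)
  then obtain q where q: "q \<in> convex hull I" "x = m q" by blast
  have "finite I" using fin unfolding I_def by simp
  then obtain u where u: "\<forall>p\<in>I. 0 \<le> u p" "sum u I = 1" "(\<Sum>p\<in>I. u p *\<^sub>R p) = q"
    using q(1) unfolding convex_hull_finite[OF \<open>finite I\<close>] by blast
  have x_eq: "x = midpoint (\<Sum>p\<in>I. u p *\<^sub>R fst p) (\<Sum>p\<in>I. u p *\<^sub>R snd p)"
    unfolding q(2) m_def u(3)[symmetric] by (simp add: fst_sum snd_sum)
  have "(\<Sum>p\<in>I. u p * inner (x - fst p) (x - snd p)) \<le> 0"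
    unfolding x_eq using anti u by (intro antimonotone_pairs_weighted_midpoint \<open>finite I\<close>) (auto simp: I_def)
  moreover have "(\<Sum>p\<in>I. u p * inner (x - fst p) (x - snd p)) = (\<Sum>p\<in>I. u p * - f x)"
    by (intro sum.cong) (auto simp: I_def h_eq minus_equation_iff)
  then have "(\<Sum>p\<in>I. u p * inner (x - fst p) (x - snd p)) = - f x"
    using u(2) by (simp add: sum_negf flip: sum_distrib_right)
  ultimately have "f x \<ge> 0" by simp
  moreover have "f x \<le> - inner (x - fst p) (x - snd p)" if "p \<in> P" for p
    unfolding f_def h_eq[symmetric] using fin that by simp
  ultimately show ?thesis by (meson neg_0_le_iff_le order_trans)
qed simp

lemma Cauchy_if_norm_diff_le:
  fixes X :: "nat \<Rightarrow> 'a::real_normed_vector"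
  assumes bound: "\<And>n m. n \<le> m \<Longrightarrow> norm (X n - X m) \<le> d n" and d: "d \<longlonglongrightarrow> 0"
  shows "Cauchy X"
proof (rule CauchyI)
  fix e :: real assume "0 < e"
  then obtain M where M: "\<And>n. M \<le> n \<Longrightarrow> d n < e"
    using order_tendstoD(2)[OF d] by (auto simp: eventually_sequentially)
  have "norm (X m - X n) < e" if "M \<le> m" "M \<le> n" for m n
    using bound[of m n] bound[of n m] M[of m] M[of n] that
    by (cases "m \<le> n") (auto simp: norm_minus_commute)
  then show "\<exists>M. \<forall>m\<ge>M. \<forall>n\<ge>M. norm (X m - X n) < e" by blast
qed

lemma norm_diff_sq_le_near_minimal:
  fixes x y :: "'a::real_inner"
  assumes C: "convex C" "x \<in> C" "y \<in> C" and low: "\<And>z. z \<in> C \<Longrightarrow> s - e \<le> norm z"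
    and xy: "norm x \<le> s + e" "norm y \<le> s + e" and s: "0 \<le> s" and e: "0 \<le> e"
  shows "(norm (x - y))\<^sup>2 \<le> 16 * s * e + 4 * e\<^sup>2"
proof -
  have "midpoint x y = (1/2) *\<^sub>R x + (1/2) *\<^sub>R y" by (simp add: midpoint_def algebra_simps)
  then have "midpoint x y \<in> C" using convexD[OF C, of "1/2" "1/2"] by simp
  then have mid: "s - e \<le> norm (midpoint x y)" by (rule low)
  have par: "(norm (x - y))\<^sup>2 = 2 * (norm x)\<^sup>2 + 2 * (norm y)\<^sup>2 - 4 * (norm (midpoint x y))\<^sup>2"
    unfolding midpoint_def power2_norm_eq_inner
    by (simp add: inner_diff_left inner_diff_right inner_add_left inner_add_right inner_commute field_simps)
  have "(norm x)\<^sup>2 \<le> (s + e)\<^sup>2" "(norm y)\<^sup>2 \<le> (s + e)\<^sup>2"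
    using xy by (auto intro!: power_mono)
  moreover have "s\<^sup>2 - 2 * s * e \<le> (norm (midpoint x y))\<^sup>2"
  proof (cases "e \<le> s")
    case True
    then have "(s - e)\<^sup>2 \<le> (norm (midpoint x y))\<^sup>2" using mid by (intro power_mono) auto
    then show ?thesis using zero_le_power2[of e] unfolding power2_diff by linarith
  next
    case False
    then have "s * s \<le> s * (2 * e)" using s e by (intro mult_left_mono) auto
    then show ?thesis using zero_le_power2[of "norm (midpoint x y)"] unfolding power2_eq_square by linarith
  qed
  ultimately show ?thesis unfolding par by (simp add: power2_eq_square algebra_simps)
qed

lemma near_minimal_norm_sequences:
  fixes C :: "nat \<Rightarrow> 'a::real_inner set"
  assumes convex: "\<And>n. convex (C n)" and decr: "\<And>n m. n \<le> m \<Longrightarrow> C m \<subseteq> C n"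
    and low: "\<And>n z. z \<in> C n \<Longrightarrow> s - \<epsilon> n \<le> norm z" and s: "0 \<le> s"
    and \<epsilon>: "\<And>n. 0 \<le> \<epsilon> n" "decseq \<epsilon>" "\<epsilon> \<longlonglongrightarrow> 0"
    and x: "\<And>n. x n \<in> C n" "\<And>n. norm (x n) \<le> s + \<epsilon> n"
    and y: "\<And>n. y n \<in> C n" "\<And>n. norm (y n) \<le> s + \<epsilon> n"
  shows "Cauchy x" and "(\<lambda>n. x n - y n) \<longlonglongrightarrow> 0"
proof -
  define d where "d n = sqrt (16 * s * \<epsilon> n + 4 * (\<epsilon> n)\<^sup>2)" for n
  have "(\<lambda>n. sqrt (16 * s * \<epsilon> n + 4 * (\<epsilon> n)\<^sup>2)) \<longlonglongrightarrow> sqrt (16 * s * 0 + 4 * 0\<^sup>2)"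
    by (intro tendsto_intros \<epsilon>(3))
  then have d: "d \<longlonglongrightarrow> 0" unfolding d_def by simp
  have close: "norm (p - q) \<le> d n"
    if "p \<in> C n" "q \<in> C n" "norm p \<le> s + \<epsilon> n" "norm q \<le> s + \<epsilon> n" for p q n
    unfolding d_def
    by (rule real_le_rsqrt[OF norm_diff_sq_le_near_minimal[OF convex that(1,2) low that(3,4) s \<epsilon>(1)]])
  have "norm (x n - x m) \<le> d n" if "n \<le> m" for n m
  proof (rule close[OF x(1) _ x(2)])
    show "x m \<in> C n" using decr[OF that] x(1)[of m] by blast
    show "norm (x m) \<le> s + \<epsilon> n"
      using x(2)[of m] \<epsilon>(2)[unfolded decseq_def, rule_format, OF that] by linarith
  qed
  then show "Cauchy x" using d by (rule Cauchy_if_norm_diff_le)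
  show "(\<lambda>n. x n - y n) \<longlonglongrightarrow> 0"
    by (rule Lim_null_comparison[OF always_eventually d]) (use close[OF x(1) y(1) x(2) y(2)] in blast)
qed

lemma closed_convex_bounded_fip:
  fixes \<S> :: "'a::{real_inner,complete_space} set set"
  assumes closed: "\<And>S. S \<in> \<S> \<Longrightarrow> closed S" and convex: "\<And>S. S \<in> \<S> \<Longrightarrow> convex S"
    and bounded: "\<And>S. S \<in> \<S> \<Longrightarrow> bounded S"
    and fip: "\<And>\<F>. finite \<F> \<Longrightarrow> \<F> \<subseteq> \<S> \<Longrightarrow> \<Inter>\<F> \<noteq> {}"
  shows "\<Inter>\<S> \<noteq> {}"
proof (cases "\<S> = {}")
  case False
  then obtain S0 where S0: "S0 \<in> \<S>" by blast
  then obtain R where R: "\<And>x. x \<in> S0 \<Longrightarrow> norm x \<le> R" using bounded bounded_iff by meson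
  define adm where "adm \<F> \<longleftrightarrow> finite \<F> \<and> \<F> \<subseteq> \<S> \<and> S0 \<in> \<F>" for \<F>
  define \<phi> where "\<phi> \<F> = Inf (norm ` \<Inter>\<F>)" for \<F> :: "'a set set"
  have ne: "\<Inter>\<F> \<noteq> {}" if "adm \<F>" for \<F> using fip that unfolding adm_def by blast
  have bdd: "bdd_below (norm ` A)" for A :: "'a set" by (rule bdd_belowI2[where m=0]) simp
  have \<phi>_le: "\<phi> \<F> \<le> norm x" if "x \<in> \<Inter>\<F>" for x :: 'a and \<F>
    unfolding \<phi>_def by (rule cInf_lower[OF _ bdd]) (use that in auto)
  have \<phi>_approx: "\<exists>x\<in>\<Inter>\<F>. norm x < \<phi> \<F> + e" if "adm \<F>" "0 < e" for \<F> e
  proof -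
    have "Inf (norm ` \<Inter>\<F>) < \<phi> \<F> + e" using that(2) unfolding \<phi>_def by simp
    then show ?thesis using cInf_less_iff[OF _ bdd] ne[OF that(1)] by auto
  qed
  have \<phi>_mono: "\<phi> \<F> \<le> \<phi> \<G>" if "adm \<G>" "\<F> \<subseteq> \<G>" for \<F> \<G>
    unfolding \<phi>_def[of \<G>] using ne[OF that(1)] \<phi>_le that(2) by (intro cInf_greatest) auto
  have \<phi>_nonneg: "0 \<le> \<phi> \<F>" if "adm \<F>" for \<F>
    unfolding \<phi>_def using ne[OF that] by (intro cInf_greatest) auto
  have \<phi>_R: "\<phi> \<F> \<le> R" if \<F>: "adm \<F>" for \<F>
  proof -
    obtain x where "x \<in> \<Inter>\<F>" using ne[OF \<F>] by blast
    moreover have "S0 \<in> \<F>" using \<F> unfolding adm_def by simp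
    ultimately show ?thesis using \<phi>_le R by (meson InterE order_trans)
  qed
  have adm_S0: "adm {S0}" unfolding adm_def using S0 by simp
  define s where "s = Sup (\<phi> ` Collect adm)"
  have bdd_s: "bdd_above (\<phi> ` Collect adm)" using \<phi>_R by (intro bdd_aboveI2[where M=R]) auto
  have \<phi>_s: "\<phi> \<F> \<le> s" if "adm \<F>" for \<F>
    unfolding s_def using bdd_s that by (intro cSup_upper) auto
  have s0: "0 \<le> s" using \<phi>_s[OF adm_S0] \<phi>_nonneg[OF adm_S0] by simp
  define \<epsilon> where "\<epsilon> n = inverse (real (Suc n))" for n
  have \<epsilon>_pos: "0 < \<epsilon> n" for n unfolding \<epsilon>_def by simp
  have "\<exists>\<F>. adm \<F> \<and> s - \<epsilon> n < \<phi> \<F>" for n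
  proof -
    have "s - \<epsilon> n < Sup (\<phi> ` Collect adm)" using \<epsilon>_pos[of n] unfolding s_def by simp
    then show ?thesis using less_cSup_iff[OF _ bdd_s] adm_S0 by blast
  qed
  then obtain \<F> where \<F>: "\<And>n. adm (\<F> n)" "\<And>n. s - \<epsilon> n < \<phi> (\<F> n)" by metis
  define \<G> where "\<G> n = (\<Union>k\<le>n. \<F> k)" for n
  have \<G>: "adm (\<G> n)" for n using \<F>(1) unfolding \<G>_def adm_def by auto
  have \<G>_mono: "\<G> n \<subseteq> \<G> m" if "n \<le> m" for n m unfolding \<G>_def using that by (intro UN_mono) auto
  have low: "s - \<epsilon> n \<le> norm z" if "z \<in> \<Inter>(\<G> n)" for n z
  proof -
    have "\<phi> (\<F> n) \<le> \<phi> (\<G> n)" using \<G>[of n] by (intro \<phi>_mono) (auto simp: \<G>_def)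
    then show ?thesis using \<F>(2)[of n] \<phi>_le[OF that] by simp
  qed
  have near: "\<exists>y. y \<in> \<Inter>(insert S (\<G> n)) \<and> norm y \<le> s + \<epsilon> n" if "S \<in> \<S>" for S n
  proof -
    have adm: "adm (insert S (\<G> n))" using \<G>[of n] that unfolding adm_def by auto
    then obtain y where y: "y \<in> \<Inter>(insert S (\<G> n))" "norm y < \<phi> (insert S (\<G> n)) + \<epsilon> n"
      using \<phi>_approx \<epsilon>_pos by blast
    moreover have "\<phi> (insert S (\<G> n)) \<le> s" by (rule \<phi>_s[OF adm])
    ultimately have "norm y \<le> s + \<epsilon> n" by linarith
    then show ?thesis using y(1) by blast
  qed
  define y where "y S n = (SOME y. y \<in> \<Inter>(insert S (\<G> n)) \<and> norm y \<le> s + \<epsilon> n)" for S n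
  have y: "y S n \<in> \<Inter>(insert S (\<G> n))" "norm (y S n) \<le> s + \<epsilon> n" if "S \<in> \<S>" for S n
    using someI_ex[OF near[OF that, of n]] unfolding y_def by blast+
  have yG: "y S n \<in> \<Inter>(\<G> n)" if "S \<in> \<S>" for S n using y(1)[OF that, of n] by blast
  have \<epsilon>: "\<And>n. 0 \<le> \<epsilon> n" "decseq \<epsilon>" "\<epsilon> \<longlonglongrightarrow> 0"
  proof -
    show "0 \<le> \<epsilon> n" for n using \<epsilon>_pos[of n] by simp
    show "decseq \<epsilon>" unfolding decseq_def \<epsilon>_def by (auto intro!: le_imp_inverse_le)
    show "\<epsilon> \<longlonglongrightarrow> 0" unfolding \<epsilon>_def by (rule LIMSEQ_inverse_real_of_nat)
  qed
  have conv: "convex (\<Inter>(\<G> n))" for n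
    using \<G>[of n] convex unfolding adm_def by (blast intro: convex_Inter)
  have decr: "\<Inter>(\<G> m) \<subseteq> \<Inter>(\<G> n)" if "n \<le> m" for n m using \<G>_mono[OF that] by blast
  have seq: "Cauchy (y S0) \<and> (\<lambda>n. y S0 n - y S n) \<longlonglongrightarrow> 0" if "S \<in> \<S>" for S
    using near_minimal_norm_sequences[OF conv decr low s0 \<epsilon> yG[OF S0] y(2)[OF S0] yG[OF that] y(2)[OF that]]
    by blast
  obtain l where l: "y S0 \<longlonglongrightarrow> l"
    using seq[OF S0, THEN conjunct1] unfolding Cauchy_convergent_iff convergent_def by blast
  have "l \<in> S" if S: "S \<in> \<S>" for S
  proof -
    have "(\<lambda>n. y S0 n - (y S0 n - y S n)) \<longlonglongrightarrow> l - 0" by (intro tendsto_intros l seq[OF S, THEN conjunct2])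
    then have "y S \<longlonglongrightarrow> l" by simp
    moreover have "\<forall>n. y S n \<in> S" using y(1)[OF S] by blast
    ultimately show ?thesis using closed_sequentially[OF closed[OF S]] by blast
  qed
  then show ?thesis by blast
qed simp

theorem maximally_monotone_op_surjective:
  fixes A :: "'a::{real_inner,complete_space} \<Rightarrow> 'a set"
  assumes max: "maximally_monotone_op A" and g: "0 < g"
  shows "\<exists>x. \<exists>u\<in>A x. y = x + g *\<^sub>R u"
proof -
  define G where "G = {(z, v). v \<in> A z}"
  define pr where "pr e = (fst e, y - g *\<^sub>R snd e)" for e :: "'a \<times> 'a"
  define ball where "ball e = cball (midpoint (fst (pr e)) (snd (pr e))) (dist (fst (pr e)) (snd (pr e)) / 2)"
    for e
  have "\<Inter>(ball ` G) \<noteq> {}"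
  proof (rule closed_convex_bounded_fip)
    fix \<F> assume "finite \<F>" "\<F> \<subseteq> ball ` G"
    then obtain E where E: "E \<subseteq> G" "finite E" "\<F> = ball ` E" by (meson finite_subset_image)
    have "inner (fst p - fst q) (snd p - snd q) \<le> 0" if pq: "p \<in> pr ` E" "q \<in> pr ` E" for p q
    proof -
      obtain e e' where "e \<in> E" "e' \<in> E" "p = pr e" "q = pr e'" using pq by (meson imageE)
      then have e: "e \<in> G" "e' \<in> G" "p = pr e" "q = pr e'" using E(1) by auto
      have "snd e \<in> A (fst e)" "snd e' \<in> A (fst e')" using e(1,2) unfolding G_def by auto
      then have "0 \<le> inner (fst e - fst e') (snd e - snd e')"
        by (rule monotone_opD[OF maximally_monotone_op_imp_monotone[OF max]])
      moreover have "inner (fst p - fst q) (snd p - snd q) = - g * inner (fst e - fst e') (snd e - snd e')"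
        using e(3,4) by (simp add: pr_def inner_diff_right algebra_simps)
      ultimately show ?thesis using g by simp
    qed
    then obtain x where "\<forall>p\<in>pr ` E. inner (x - fst p) (x - snd p) \<le> 0"
      using antimonotone_pairs_common_point[of "pr ` E"] E(2) by blast
    then show "\<Inter>\<F> \<noteq> {}" unfolding E(3) ball_def inner_diff_diff_nonpos_iff by blast
  qed (auto simp: ball_def)
  then obtain x where x_in: "\<And>e. e \<in> G \<Longrightarrow> x \<in> ball e" by blast
  have x: "inner (x - z) (x - (y - g *\<^sub>R v)) \<le> 0" if "v \<in> A z" for z v
  proof -
    have "x \<in> ball (z, v)" using that by (intro x_in) (simp add: G_def)
    then show ?thesis unfolding ball_def pr_def inner_diff_diff_nonpos_iff by simp
  qed
  define u where "u = (1 / g) *\<^sub>R (y - x)"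
  have "u \<in> A x"
  proof (rule maximally_monotone_op_memI[OF max])
    fix z v assume "v \<in> A z"
    have "inner (x - z) (u - v) = - (1 / g) * inner (x - z) (x - (y - g *\<^sub>R v))"
      using g by (simp add: u_def inner_diff_right algebra_simps)
    then show "0 \<le> inner (x - z) (u - v)" using x[OF \<open>v \<in> A z\<close>] g by (simp add: divide_nonpos_pos)
  qed
  moreover have "y = x + g *\<^sub>R u" using g by (simp add: u_def)
  ultimately show ?thesis by blast
qed

lemma resolvent_eqI:
  assumes mono: "monotone_op A" and g: "0 < g" and u: "u \<in> A x" and y: "y = x + g *\<^sub>R u"
  shows "resolvent g A y = x"
  unfolding resolvent_def
proof (rule the_equality)
  show "\<exists>u\<in>A x. y = x + g *\<^sub>R u" using u y by blast
next
  fix x' assume "\<exists>u\<in>A x'. y = x' + g *\<^sub>R u"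
  then obtain u' where u': "u' \<in> A x'" "y = x' + g *\<^sub>R u'" by blast
  have xx: "x' - x = g *\<^sub>R (u - u')" using y u'(2) by (simp add: algebra_simps)
  have "0 \<le> inner (x' - x) (u' - u)" by (rule monotone_opD[OF mono u'(1) u])
  also have "inner (x' - x) (u' - u) = - g * inner (u - u') (u - u')"
    unfolding xx by (simp add: inner_diff_right algebra_simps inner_commute)
  finally have "inner (u - u') (u - u') \<le> 0" using g by (simp add: mult_le_0_iff)
  then have "inner (u - u') (u - u') = 0" using inner_ge_zero[of "u - u'"] by linarith
  then have "u = u'" by simp
  then show "x' = x" using xx by simp
qed

lemma resolvent_decomposition:
  fixes A :: "'a::{real_inner,complete_space} \<Rightarrow> 'a set"
  assumes max: "maximally_monotone_op A" and g: "0 < g"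
  shows "\<exists>u\<in>A (resolvent g A y). y = resolvent g A y + g *\<^sub>R u"
proof -
  obtain x u where "u \<in> A x" "y = x + g *\<^sub>R u" using maximally_monotone_op_surjective[OF max g] by blast
  moreover have "resolvent g A y = x"
    using resolvent_eqI[OF maximally_monotone_op_imp_monotone[OF max] g] calculation by blast
  ultimately show ?thesis by auto
qed

lemma resolvent_nonexpansive:
  fixes A :: "'a::{real_inner,complete_space} \<Rightarrow> 'a set"
  assumes max: "maximally_monotone_op A" and g: "0 < g"
  shows "norm (resolvent g A y - resolvent g A y') \<le> norm (y - y')"
proof -
  define p p' where "p = resolvent g A y" and "p' = resolvent g A y'"
  obtain u where u: "u \<in> A p" "y = p + g *\<^sub>R u"
    using resolvent_decomposition[OF max g, of y] unfolding p_def by blast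
  obtain u' where u': "u' \<in> A p'" "y' = p' + g *\<^sub>R u'"
    using resolvent_decomposition[OF max g, of y'] unfolding p'_def by blast
  have "0 \<le> inner (p - p') (u - u')"
    by (rule monotone_opD[OF maximally_monotone_op_imp_monotone[OF max] u(1) u'(1)])
  moreover have "y - y' = (p - p') + g *\<^sub>R (u - u')" using u(2) u'(2) by (simp add: algebra_simps)
  then have "(norm (y - y'))\<^sup>2 = (norm (p - p'))\<^sup>2 + 2 * g * inner (p - p') (u - u') + (norm (g *\<^sub>R (u - u')))\<^sup>2"
    unfolding power2_norm_eq_inner by (simp add: inner_add_left inner_add_right inner_commute)
  ultimately have "(norm (p - p'))\<^sup>2 \<le> (norm (y - y'))\<^sup>2"
    using g zero_le_power2[of "norm (g *\<^sub>R (u - u'))"] by (smt (verit) mult_nonneg_nonneg)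
  then show ?thesis unfolding p_def p'_def by (rule power2_le_imp_le) simp
qed

lemma resolvent_sv:
  fixes F :: "'a::{real_inner,complete_space} \<Rightarrow> 'a"
  assumes "maximally_monotone_op (sv F)" and "0 < g"
  shows "y = resolvent g (sv F) y + g *\<^sub>R F (resolvent g (sv F) y)"
  using resolvent_decomposition[OF assms, of y] unfolding sv_def by auto

lemma mt_differences_cumulative:
  fixes dx dz c :: "nat \<Rightarrow> 'a::real_vector"
  assumes N: "2 \<le> N"
    and first: "dx 1 = dz 1 + c 1"
    and middle: "\<And>i. i \<in> {2..N-1} \<Longrightarrow> dx i + dz (i-1) - dx (i-1) = dz i + c i"
    and last: "dz 1 + dz (N-1) - dx (N-1) = dz N + c N"
  shows "\<And>i. i \<in> {1..N-1} \<Longrightarrow> dx i = dz i + (\<Sum>j=1..i. c j)"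
    and "dz 1 - dz N = (\<Sum>j=1..N. c j)"
proof -
  have cum: "dx i = dz i + (\<Sum>j=1..i. c j)" if "1 \<le> i" "i \<le> N - 1" for i
    using that
  proof (induction i rule: nat_induct_at_least)
    case base
    then show ?case using first by simp
  next
    case (Suc i)
    then have "dx (Suc i) + dz i - dx i = dz (Suc i) + c (Suc i)" using middle[of "Suc i"] by simp
    then show ?case using Suc by (simp add: algebra_simps)
  qed
  then show "\<And>i. i \<in> {1..N-1} \<Longrightarrow> dx i = dz i + (\<Sum>j=1..i. c j)" by simp
  have "(\<Sum>j=1..N. c j) = (\<Sum>j=1..N-1. c j) + c N"
    using N by (cases N) auto
  then show "dz 1 - dz N = (\<Sum>j=1..N. c j)"
    using cum[of "N-1"] last N by (simp add: algebra_simps)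
qed

lemma sum_inner_partial_sums_telescope:
  fixes z c :: "nat \<Rightarrow> 'a::real_inner"
  assumes "1 \<le> n"
  shows "(\<Sum>i\<in>{1..<n}. inner (z i + (\<Sum>j=1..i. c j)) (z (Suc i) - z i) + (norm (z (Suc i) - z i))\<^sup>2 / 2)
           + (\<Sum>i=1..n. inner (z i) (c i))
       = (norm (z n))\<^sup>2 / 2 - (norm (z 1))\<^sup>2 / 2 + inner (z n) (\<Sum>j=1..n. c j)"
  using assms
proof (induction n rule: nat_induct_at_least)
  case base
  then show ?case by simp
next
  case (Suc n)
  define P where "P = (\<Sum>j=1..n. c j)"
  have "inner (z n + P) (z (Suc n) - z n) + (norm (z (Suc n) - z n))\<^sup>2 / 2 + inner (z (Suc n)) (c (Suc n))
      + ((norm (z n))\<^sup>2 / 2 - (norm (z 1))\<^sup>2 / 2 + inner (z n) P)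
      = (norm (z (Suc n)))\<^sup>2 / 2 - (norm (z 1))\<^sup>2 / 2 + inner (z (Suc n)) (P + c (Suc n))"
    unfolding power2_norm_eq_inner
    by (simp add: inner_add_left inner_add_right inner_diff_left inner_diff_right inner_commute field_simps)
  then show ?case using Suc by (simp add: P_def)
qed

lemma mt_energy_identity:
  fixes dx dz c :: "nat \<Rightarrow> 'a::real_inner"
  assumes N: "2 \<le> N"
    and cum: "\<And>i. i \<in> {1..N-1} \<Longrightarrow> dx i = dz i + (\<Sum>j=1..i. c j)"
    and last: "dz 1 - dz N = (\<Sum>j=1..N. c j)"
  shows "(\<Sum>i=1..N-1. (norm (dx i + \<theta> *\<^sub>R (dz (i+1) - dz i)))\<^sup>2)
       = (\<Sum>i=1..N-1. (norm (dx i))\<^sup>2) - \<theta> * (1 - \<theta>) * (\<Sum>i=1..N-1. (norm (dz (i+1) - dz i))\<^sup>2)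
         - 2 * \<theta> * (\<Sum>i=1..N. inner (dz i) (c i)) - \<theta> * (norm (dz 1 - dz N))\<^sup>2"
proof -
  define v where "v i = dz (Suc i) - dz i" for i
  define V where "V = (\<Sum>i=1..N-1. (norm (v i))\<^sup>2)"
  define S where "S = (\<Sum>i=1..N. inner (dz i) (c i))"
  have I: "{1..<N} = {1..N-1}" using N by auto
  have "(\<Sum>i=1..N-1. inner (dx i) (v i) + (norm (v i))\<^sup>2 / 2)
      = (\<Sum>i\<in>{1..<N}. inner (dz i + (\<Sum>j=1..i. c j)) (dz (Suc i) - dz i) + (norm (dz (Suc i) - dz i))\<^sup>2 / 2)"
    unfolding I v_def by (intro sum.cong) (auto simp: cum)
  then have "(\<Sum>i=1..N-1. inner (dx i) (v i) + (norm (v i))\<^sup>2 / 2) + S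
      = (norm (dz N))\<^sup>2 / 2 - (norm (dz 1))\<^sup>2 / 2 + inner (dz N) (dz 1 - dz N)"
    unfolding S_def last using sum_inner_partial_sums_telescope[of N dz c] N by simp
  also have "\<dots> = - (norm (dz 1 - dz N))\<^sup>2 / 2"
    unfolding power2_norm_eq_inner by (simp add: inner_diff_left inner_diff_right inner_commute field_simps)
  finally have inner_sum: "(\<Sum>i=1..N-1. inner (dx i) (v i)) = - V / 2 - S - (norm (dz 1 - dz N))\<^sup>2 / 2"
    unfolding V_def by (simp add: sum.distrib sum_divide_distrib[symmetric])
  have "(norm (dx i + \<theta> *\<^sub>R v i))\<^sup>2 = (norm (dx i))\<^sup>2 + 2 * \<theta> * inner (dx i) (v i) + \<theta>\<^sup>2 * (norm (v i))\<^sup>2"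
    for i
    unfolding power2_norm_eq_inner
    by (simp add: inner_add_left inner_add_right inner_commute power2_eq_square algebra_simps)
  then have "(\<Sum>i=1..N-1. (norm (dx i + \<theta> *\<^sub>R v i))\<^sup>2)
      = (\<Sum>i=1..N-1. (norm (dx i))\<^sup>2) + 2 * \<theta> * (\<Sum>i=1..N-1. inner (dx i) (v i)) + \<theta>\<^sup>2 * V"
    unfolding V_def by (simp add: sum.distrib sum_distrib_left)
  then show ?thesis
    unfolding Suc_eq_plus1[symmetric] v_def[symmetric] V_def[symmetric] S_def[symmetric] inner_sum
    by (simp add: power2_eq_square algebra_simps)
qed

lemma cumulative_sum_sq_bound:
  fixes dx dz c :: "nat \<Rightarrow> 'a::real_normed_vector"
  assumes cum: "\<And>i. i \<in> {1..N-1} \<Longrightarrow> dx i = dz i + (\<Sum>j=1..i. c j)"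
    and lip: "\<And>i. i \<in> {1..N-1} \<Longrightarrow> norm (c i) \<le> K * norm (dz i)" and K: "0 \<le> K"
    and s: "\<And>i. i \<in> {1..N-1} \<Longrightarrow> norm (dz i) \<le> s"
  shows "(\<Sum>i=1..N-1. (norm (dx i))\<^sup>2) \<le> real N * (1 + real N * K)\<^sup>2 * s\<^sup>2"
proof -
  have bound: "norm (dx i) \<le> (1 + real N * K) * s" if i: "i \<in> {1..N-1}" for i
  proof -
    have s0: "0 \<le> s" using s[OF i] norm_ge_zero order_trans by blast
    have "norm (dx i) \<le> norm (dz i) + (\<Sum>j=1..i. norm (c j))"
      unfolding cum[OF i] using norm_triangle_ineq[of "dz i" "sum c {1..i}"] norm_sum[of c "{1..i}"]
      by linarith
    also have "(\<Sum>j=1..i. norm (c j)) \<le> (\<Sum>j=1..i. K * s)"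
    proof (rule sum_mono)
      fix j assume "j \<in> {1..i}"
      then have j: "j \<in> {1..N-1}" using i by auto
      show "norm (c j) \<le> K * s" using lip[OF j] mult_left_mono[OF s[OF j] K] by linarith
    qed
    also have "(\<Sum>j=1..i. K * s) = real i * (K * s)" by simp
    also have "\<dots> \<le> real N * (K * s)" using i K s0 by (intro mult_right_mono) auto
    finally show ?thesis using s[OF i] by (simp add: algebra_simps)
  qed
  have "(\<Sum>i=1..N-1. (norm (dx i))\<^sup>2) \<le> (\<Sum>i=1..N-1. ((1 + real N * K) * s)\<^sup>2)"
    using bound by (intro sum_mono power_mono) auto
  also have "\<dots> \<le> real N * ((1 + real N * K) * s)\<^sup>2" by (simp add: mult_right_mono)
  finally show ?thesis by (simp add: power_mult_distrib)
qed

lemma mt_sum_sq_bound_by_last: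
  fixes dx dz c :: "nat \<Rightarrow> 'a::real_normed_vector"
  assumes N: "2 \<le> N"
    and cum: "\<And>i. i \<in> {1..N-1} \<Longrightarrow> dx i = dz i + (\<Sum>j=1..i. c j)"
    and lip: "\<And>i. i \<in> {1..N-1} \<Longrightarrow> norm (c i) \<le> K * norm (dz i)" and K: "0 \<le> K"
  shows "(\<Sum>i=1..N-1. (norm (dx i))\<^sup>2)
    \<le> 2 * real N ^ 2 * (1 + real N * K)\<^sup>2 * ((norm (dz N))\<^sup>2 + (\<Sum>i=1..N-1. (norm (dz (i+1) - dz i))\<^sup>2))"
proof -
  define t where "t = (\<Sum>j=1..N-1. norm (dz (j+1) - dz j))"
  define V where "V = (\<Sum>j=1..N-1. (norm (dz (j+1) - dz j))\<^sup>2)"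
  have zb: "norm (dz i) \<le> norm (dz N) + t" if i: "i \<in> {1..N-1}" for i
  proof -
    have "i \<le> Suc (N-1)" using i by simp
    from sum_Suc_diff[OF this, of dz] have "(\<Sum>j=i..N-1. dz (j+1) - dz j) = dz N - dz i"
      using N by simp
    then have "dz i = dz N - (\<Sum>j=i..N-1. dz (j+1) - dz j)" by simp
    then have "norm (dz i) \<le> norm (dz N) + (\<Sum>j=i..N-1. norm (dz (j+1) - dz j))"
      using norm_triangle_ineq4[of "dz N" "\<Sum>j=i..N-1. dz (j+1) - dz j"]
        norm_sum[of "\<lambda>j. dz (j+1) - dz j" "{i..N-1}"] by simp
    also have "(\<Sum>j=i..N-1. norm (dz (j+1) - dz j)) \<le> t"
      unfolding t_def using i by (intro sum_mono2) auto
    finally show ?thesis by simp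
  qed
  have "(\<Sum>i=1..N-1. (norm (dx i))\<^sup>2) \<le> real N * (1 + real N * K)\<^sup>2 * (norm (dz N) + t)\<^sup>2"
    using cumulative_sum_sq_bound[of N dx dz c K] cum lip K zb by blast
  also have "(norm (dz N) + t)\<^sup>2 \<le> 2 * real N * ((norm (dz N))\<^sup>2 + V)"
  proof -
    have "t\<^sup>2 \<le> V * real (N - 1)"
      unfolding t_def V_def using sum_squared_le_sum_of_squares[of "\<lambda>j. norm (dz (j+1) - dz j)" "{1..N-1}"]
      by simp
    also have "\<dots> \<le> V * real N" unfolding V_def by (intro mult_left_mono) (auto simp: sum_nonneg)
    finally have "t\<^sup>2 \<le> real N * V" by (simp add: mult.commute)
    moreover have "(norm (dz N) + t)\<^sup>2 \<le> 2 * (norm (dz N))\<^sup>2 + 2 * t\<^sup>2"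
      using sum_squares_bound[of "norm (dz N)" t] unfolding power2_sum by linarith
    moreover have "(norm (dz N))\<^sup>2 \<le> real N * (norm (dz N))\<^sup>2" using N by (simp add: mult_le_cancel_right1)
    ultimately show ?thesis by (simp only: distrib_left mult.assoc)
  qed
  then have "real N * (1 + real N * K)\<^sup>2 * (norm (dz N) + t)\<^sup>2
      \<le> real N * (1 + real N * K)\<^sup>2 * (2 * real N * ((norm (dz N))\<^sup>2 + V))"
    by (intro mult_left_mono) auto
  finally show ?thesis unfolding V_def by (simp only: power2_eq_square[of "real N"] mult_ac)
qed

lemma mt_sum_sq_bound_by_all:
  fixes dx dz c :: "nat \<Rightarrow> 'a::real_normed_vector"
  assumes cum: "\<And>i. i \<in> {1..N-1} \<Longrightarrow> dx i = dz i + (\<Sum>j=1..i. c j)"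
    and lip: "\<And>i. i \<in> {1..N-1} \<Longrightarrow> norm (c i) \<le> K * norm (dz i)" and K: "0 \<le> K"
  shows "(\<Sum>i=1..N-1. (norm (dx i))\<^sup>2) \<le> real N ^ 2 * (1 + real N * K)\<^sup>2 * (\<Sum>i=1..N-1. (norm (dz i))\<^sup>2)"
proof -
  define t where "t = (\<Sum>j=1..N-1. norm (dz j))"
  define W where "W = (\<Sum>j=1..N-1. (norm (dz j))\<^sup>2)"
  have zb: "norm (dz i) \<le> t" if "i \<in> {1..N-1}" for i
    unfolding t_def using that by (intro member_le_sum) auto
  have "(\<Sum>i=1..N-1. (norm (dx i))\<^sup>2) \<le> real N * (1 + real N * K)\<^sup>2 * t\<^sup>2"
    using cumulative_sum_sq_bound[of N dx dz c K] cum lip K zb by blast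
  also have "t\<^sup>2 \<le> real N * W"
  proof -
    have "t\<^sup>2 \<le> W * real (N - 1)"
      unfolding t_def W_def using sum_squared_le_sum_of_squares[of "\<lambda>j. norm (dz j)" "{1..N-1}"] by simp
    also have "\<dots> \<le> W * real N" unfolding W_def by (intro mult_left_mono) (auto simp: sum_nonneg)
    finally show ?thesis by (simp add: mult.commute)
  qed
  then have "real N * (1 + real N * K)\<^sup>2 * t\<^sup>2 \<le> real N * (1 + real N * K)\<^sup>2 * (real N * W)"
    by (intro mult_left_mono) auto
  finally show ?thesis unfolding W_def by (simp only: power2_eq_square[of "real N"] mult_ac)
qed

definition mt_delta :: "nat \<Rightarrow> real \<Rightarrow> real \<Rightarrow> real \<Rightarrow> real" where
  "mt_delta N \<theta> K m = min (\<theta> * (1 - \<theta>)) (2 * \<theta> * m) / (2 * real N ^ 2 * (1 + real N * K)\<^sup>2)"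

lemma mt_delta_bounds:
  assumes N: "2 \<le> N" and \<theta>: "0 < \<theta>" "\<theta> < 1" and K: "0 \<le> K" and m: "0 < m"
  shows "0 < mt_delta N \<theta> K m" and "mt_delta N \<theta> K m < 1"
proof -
  define c where "c = min (\<theta> * (1 - \<theta>)) (2 * \<theta> * m)"
  define D where "D = 2 * real N ^ 2 * (1 + real N * K)\<^sup>2"
  have "1 \<le> real N ^ 2" using N by simp
  moreover have "1 \<le> (1 + real N * K)\<^sup>2" using K by simp
  ultimately have "1 * 1 \<le> real N ^ 2 * (1 + real N * K)\<^sup>2" by (intro mult_mono) auto
  then have D: "1 \<le> D" unfolding D_def by simp
  have c: "0 < c" unfolding c_def using \<theta> m by simp
  have "\<theta> * (1 - \<theta>) \<le> \<theta> * 1" using \<theta> by (intro mult_left_mono) auto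
  then have "c < 1" unfolding c_def using \<theta> by linarith
  then show "0 < mt_delta N \<theta> K m" "mt_delta N \<theta> K m < 1"
    unfolding mt_delta_def c_def[symmetric] D_def[symmetric] using c D by (simp_all add: divide_less_eq)
qed

lemma mt_contraction:
  fixes dx dz c :: "nat \<Rightarrow> 'a::real_inner"
  assumes N: "2 \<le> N" and \<theta>: "0 < \<theta>" "\<theta> < 1" and K: "0 \<le> K" and m: "0 < m"
    and cum: "\<And>i. i \<in> {1..N-1} \<Longrightarrow> dx i = dz i + (\<Sum>j=1..i. c j)"
    and last: "dz 1 - dz N = (\<Sum>j=1..N. c j)"
    and mono: "\<And>i. i \<in> {1..N} \<Longrightarrow> 0 \<le> inner (dz i) (c i)"
    and lip: "\<And>i. i \<in> {1..N-1} \<Longrightarrow> norm (c i) \<le> K * norm (dz i)"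
    and strong: "m * (norm (dz N))\<^sup>2 \<le> inner (dz N) (c N)
      \<or> (\<forall>i\<in>{1..N-1}. m * (norm (dz i))\<^sup>2 \<le> inner (dz i) (c i))"
  shows "(\<Sum>i=1..N-1. (norm (dx i + \<theta> *\<^sub>R (dz (i+1) - dz i)))\<^sup>2)
    \<le> (1 - mt_delta N \<theta> K m) * (\<Sum>i=1..N-1. (norm (dx i))\<^sup>2)"
proof -
  define X where "X = (\<Sum>i=1..N-1. (norm (dx i))\<^sup>2)"
  define V where "V = (\<Sum>i=1..N-1. (norm (dz (i+1) - dz i))\<^sup>2)"
  define S where "S = (\<Sum>i=1..N. inner (dz i) (c i))"
  define c0 where "c0 = min (\<theta> * (1 - \<theta>)) (2 * \<theta> * m)"
  define Q where "Q = 2 * real N ^ 2 * (1 + real N * K)\<^sup>2"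
  have V0: "0 \<le> V" unfolding V_def by (simp add: sum_nonneg)
  have c0: "0 \<le> c0" "c0 \<le> \<theta> * (1 - \<theta>)" "c0 \<le> 2 * \<theta> * m" unfolding c0_def using \<theta> m by auto
  have "0 < 1 + real N * K" using K by (simp add: add_pos_nonneg)
  then have Q: "0 < Q" unfolding Q_def using N by simp
  have S_split: "S = (\<Sum>i=1..N-1. inner (dz i) (c i)) + inner (dz N) (c N)"
    unfolding S_def using N by (cases N) auto
  have "0 \<le> (\<Sum>i=1..N-1. inner (dz i) (c i))" by (intro sum_nonneg mono) auto
  moreover have "0 \<le> inner (dz N) (c N)" using N by (intro mono) auto
  ultimately have S_first: "(\<Sum>i=1..N-1. inner (dz i) (c i)) \<le> S" and S_last: "inner (dz N) (c N) \<le> S"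
    using S_split by linarith+
  have scale: "c0 * X \<le> Q * R" if "X \<le> Q * Y" "c0 * Y \<le> R" for Y R
  proof -
    have "c0 * X \<le> c0 * (Q * Y)" using that(1) c0(1) by (rule mult_left_mono)
    also have "\<dots> = Q * (c0 * Y)" by simp
    also have "\<dots> \<le> Q * R" using that(2) Q by simp
    finally show ?thesis .
  qed
  have "c0 * X \<le> Q * (\<theta> * (1 - \<theta>) * V + 2 * \<theta> * S)"
    using strong
  proof
    assume strong_last: "m * (norm (dz N))\<^sup>2 \<le> inner (dz N) (c N)"
    show ?thesis
    proof (rule scale)
      show "X \<le> Q * ((norm (dz N))\<^sup>2 + V)"
        unfolding X_def V_def Q_def by (rule mt_sum_sq_bound_by_last[OF N cum lip K])
      have "c0 * (norm (dz N))\<^sup>2 \<le> 2 * \<theta> * m * (norm (dz N))\<^sup>2" using c0 by (intro mult_right_mono) auto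
      also have "\<dots> \<le> 2 * \<theta> * S" using strong_last S_last \<theta> by (simp add: mult.assoc)
      finally show "c0 * ((norm (dz N))\<^sup>2 + V) \<le> \<theta> * (1 - \<theta>) * V + 2 * \<theta> * S"
        using mult_right_mono[OF c0(2) V0] by (simp add: distrib_left)
    qed
  next
    assume strong_all: "\<forall>i\<in>{1..N-1}. m * (norm (dz i))\<^sup>2 \<le> inner (dz i) (c i)"
    define W where "W = (\<Sum>i=1..N-1. (norm (dz i))\<^sup>2)"
    show ?thesis
    proof (rule scale)
      have "X \<le> real N ^ 2 * (1 + real N * K)\<^sup>2 * W"
        unfolding X_def W_def by (rule mt_sum_sq_bound_by_all[OF cum lip K])
      also have "\<dots> \<le> Q * W" unfolding Q_def W_def by (intro mult_right_mono) (auto simp: sum_nonneg)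
      finally show "X \<le> Q * W" .
      have "m * W \<le> (\<Sum>i=1..N-1. inner (dz i) (c i))"
        unfolding W_def sum_distrib_left using strong_all by (intro sum_mono) auto
      have "c0 * W \<le> 2 * \<theta> * (m * W)"
        using mult_right_mono[OF c0(3), of W] unfolding W_def by (simp add: sum_nonneg mult.assoc)
      also have "\<dots> \<le> 2 * \<theta> * S"
        using \<open>m * W \<le> _\<close> S_first \<theta> by (intro mult_left_mono) auto
      finally have "c0 * W \<le> 2 * \<theta> * S" .
      moreover have "0 \<le> \<theta> * (1 - \<theta>) * V" using \<theta> V0 by simp
      ultimately show "c0 * W \<le> \<theta> * (1 - \<theta>) * V + 2 * \<theta> * S" by linarith
    qed
  qed
  then have "mt_delta N \<theta> K m * X \<le> \<theta> * (1 - \<theta>) * V + 2 * \<theta> * S"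
    using Q unfolding mt_delta_def c0_def[symmetric] Q_def[symmetric] by (simp add: field_simps)
  moreover have "(\<Sum>i=1..N-1. (norm (dx i + \<theta> *\<^sub>R (dz (i+1) - dz i)))\<^sup>2)
      = X - \<theta> * (1 - \<theta>) * V - 2 * \<theta> * S - \<theta> * (norm (dz 1 - dz N))\<^sup>2"
    unfolding X_def V_def S_def by (rule mt_energy_identity[OF N cum last])
  moreover have "0 \<le> \<theta> * (norm (dz 1 - dz N))\<^sup>2" using \<theta> by simp
  ultimately show ?thesis unfolding X_def by (simp add: algebra_simps)
qed

definition vdist :: "nat set \<Rightarrow> (nat \<Rightarrow> 'a::real_normed_vector) \<Rightarrow> (nat \<Rightarrow> 'a) \<Rightarrow> real" where
  "vdist I p q = L2_set (\<lambda>i. norm (p i - q i)) I"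

lemma rlinear_vec_iff_vdist:
  "rlinear_vec I a l \<longleftrightarrow> (\<exists>C r. 0 \<le> C \<and> 0 < r \<and> r < 1 \<and> (\<forall>n. vdist I (a n) l \<le> C * r ^ n))"
  unfolding rlinear_vec_def vdist_def L2_set_def by simp

lemma vdist_cong: "(\<And>i. i \<in> I \<Longrightarrow> p i = p' i) \<Longrightarrow> vdist I p q = vdist I p' q"
  unfolding vdist_def by (rule L2_set_cong) auto

lemma vdist_nonneg: "0 \<le> vdist I p q"
  unfolding vdist_def by simp

lemma vdist_square: "(vdist I p q)\<^sup>2 = (\<Sum>i\<in>I. (norm (p i - q i))\<^sup>2)"
  unfolding vdist_def L2_set_def by (simp add: sum_nonneg)

lemma norm_le_vdist: "finite I \<Longrightarrow> i \<in> I \<Longrightarrow> norm (p i - q i) \<le> vdist I p q"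
  unfolding vdist_def by (rule member_le_L2_set)

lemma vdist_triangle: "vdist I p r \<le> vdist I p q + vdist I q r"
proof -
  have "vdist I p r \<le> L2_set (\<lambda>i. norm (p i - q i) + norm (q i - r i)) I"
    unfolding vdist_def
  proof (rule L2_set_mono)
    show "norm (p i - r i) \<le> norm (p i - q i) + norm (q i - r i)" for i
      using norm_triangle_ineq[of "p i - q i" "q i - r i"] by simp
  qed simp
  also have "\<dots> \<le> vdist I p q + vdist I q r"
    unfolding vdist_def by (rule L2_set_triangle_ineq)
  finally show ?thesis .
qed

lemma vdist_le_card:
  assumes "\<And>i. i \<in> I \<Longrightarrow> norm (p i - q i) \<le> e"
  shows "vdist I p q \<le> sqrt (real (card I)) * e"
proof -
  have "vdist I p q \<le> L2_set (\<lambda>i. e) I" unfolding vdist_def by (rule L2_set_mono) (use assms in auto)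
  also have "\<dots> = sqrt (real (card I)) * e"
  proof (cases "I = {}")
    case False
    then obtain i where "i \<in> I" by blast
    then have "0 \<le> e" using assms[of i] by (meson norm_ge_zero order_trans)
    then show ?thesis by (simp add: L2_set_constant)
  qed simp
  finally show ?thesis .
qed

lemma mt_z_eqI:
  assumes N: "2 \<le> N"
    and first: "z 1 = resolvent g (A 1) (x 1)"
    and middle: "\<And>i. i \<in> {2..N-1} \<Longrightarrow> z i = resolvent g (A i) (x i + z (i-1) - x (i-1))"
    and last: "z N = resolvent g (A N) (z 1 + z (N-1) - x (N-1))"
  shows "\<And>i. i \<in> {1..N} \<Longrightarrow> z i = mt_z N A g x i"
proof -
  have zz: "z i = mt_zz A g x i" if "1 \<le> i" "i \<le> N - 1" for i
    using that
  proof (induction i rule: nat_induct_at_least)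
    case base
    then show ?case using first by simp
  next
    case (Suc i)
    then obtain k where "i = Suc k" using not0_implies_Suc by fastforce
    then show ?case using Suc middle[of "Suc i"] by (simp add: algebra_simps)
  qed
  show "z i = mt_z N A g x i" if "i \<in> {1..N}" for i
  proof (cases "i = N")
    case True
    then show ?thesis using last zz[of 1] zz[of "N-1"] N by (simp add: mt_z_def)
  next
    case False
    then have "i \<le> N - 1" using that by auto
    then show ?thesis using zz[of i] that False by (simp add: mt_z_def)
  qed
qed

locale mt_problem =
  fixes N :: nat and F :: "nat \<Rightarrow> 'a::{real_inner,complete_space} \<Rightarrow> 'a" and B :: "'a \<Rightarrow> 'a set"
    and L \<mu> :: real and zs :: 'a and u :: "nat \<Rightarrow> 'a"
  assumes N: "2 \<le> N"
    and F_max: "\<And>i. i \<in> {1..N-1} \<Longrightarrow> maximally_monotone_op (sv (F i))"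
    and F_lip: "\<And>i. i \<in> {1..N-1} \<Longrightarrow> L-lipschitz_on UNIV (F i)"
    and B_max: "maximally_monotone_op B"
    and strong: "strongly_monotone_op \<mu> B \<or> (\<forall>i\<in>{1..N-1}. strongly_monotone_op \<mu> (sv (F i)))"
    and \<mu>: "0 < \<mu>"
    and u_in: "\<And>i. i \<in> {1..N} \<Longrightarrow> u i \<in> ops N F B i zs"
    and u_sum: "(\<Sum>i=1..N. u i) = 0"
begin

abbreviation A where "A \<equiv> ops N F B"

text \<open>The fixed point of the Malitsky--Tam operator with step \<open>g\<close> belonging to the zero \<open>zs\<close>
  and its decomposition \<open>0 = u 1 + \<dots> + u N\<close> with \<open>u i \<in> A i zs\<close>.\<close>
definition fixpt :: "real \<Rightarrow> nat \<Rightarrow> 'a" where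
  "fixpt g i = zs + g *\<^sub>R (\<Sum>j=1..i. u j)"

lemma one_in: "1 \<in> {1..N-1}" and last_in: "N - 1 \<in> {1..N-1}"
  using N by auto

lemma A_last: "A N = B"
  by (simp add: ops_def)

lemma A_sv: "i \<in> {1..N-1} \<Longrightarrow> A i = sv (F i)"
  using N by (auto simp: ops_def)

lemma A_max: "i \<in> {1..N} \<Longrightarrow> maximally_monotone_op (A i)"
  using F_max B_max by (cases "i = N") (auto simp: ops_def)

lemma A_mono: "i \<in> {1..N} \<Longrightarrow> monotone_op (A i)"
  by (rule maximally_monotone_op_imp_monotone[OF A_max])

lemma u_F: "i \<in> {1..N-1} \<Longrightarrow> u i = F i zs"
  using u_in[of i] A_sv[of i] by (auto simp: sv_def)

lemma u_last: "u N \<in> B zs"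
  using u_in[of N] N by (simp add: A_last)

lemma L_nonneg: "0 \<le> L"
  using F_lip[OF one_in] by (simp add: lipschitz_on_def)

lemma resolvent_A_sv: "i \<in> {1..N-1} \<Longrightarrow> 0 < g \<Longrightarrow> y = resolvent g (A i) y + g *\<^sub>R F i (resolvent g (A i) y)"
  using resolvent_sv[OF F_max] by (simp add: A_sv)

lemma resolvent_A_eqI: "i \<in> {1..N} \<Longrightarrow> 0 < g \<Longrightarrow> v \<in> A i p \<Longrightarrow> resolvent g (A i) (p + g *\<^sub>R v) = p"
  using resolvent_eqI[OF A_mono] by blast

lemma fixpt_first: "fixpt g 1 = zs + g *\<^sub>R u 1"
  by (simp add: fixpt_def)

lemma fixpt_middle: "i \<in> {2..N-1} \<Longrightarrow> fixpt g i + zs - fixpt g (i-1) = zs + g *\<^sub>R u i"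
  by (cases i) (auto simp: fixpt_def algebra_simps)

lemma fixpt_last: "zs + zs - fixpt g (N-1) = zs + g *\<^sub>R u N"
proof -
  obtain k where k: "N = Suc k" using N by (cases N) auto
  have "(\<Sum>j=1..N-1. u j) = - u N" using u_sum unfolding k by (simp add: eq_neg_iff_add_eq_0)
  then show ?thesis by (simp add: fixpt_def algebra_simps)
qed

lemma fixpt_resolvents:
  assumes g: "0 < g"
  shows fixpt_resolvent_first: "resolvent g (A 1) (fixpt g 1) = zs"
    and fixpt_resolvent_middle:
      "\<And>i. i \<in> {2..N-1} \<Longrightarrow> resolvent g (A i) (fixpt g i + zs - fixpt g (i-1)) = zs"
    and fixpt_resolvent_last: "resolvent g (A N) (zs + zs - fixpt g (N-1)) = zs"
proof -
  have res: "resolvent g (A i) (zs + g *\<^sub>R u i) = zs" if "i \<in> {1..N}" for i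
    using resolvent_A_eqI[OF that g u_in[OF that]] .
  show "resolvent g (A 1) (fixpt g 1) = zs" using res[of 1] N unfolding fixpt_first by simp
  show "resolvent g (A i) (fixpt g i + zs - fixpt g (i-1)) = zs" if "i \<in> {2..N-1}" for i
    using res[of i] that unfolding fixpt_middle[OF that] by auto
  show "resolvent g (A N) (zs + zs - fixpt g (N-1)) = zs" using res[of N] N unfolding fixpt_last by simp
qed

lemma mt_z_fixpt: "0 < g \<Longrightarrow> i \<in> {1..N} \<Longrightarrow> mt_z N A g (fixpt g) i = zs"
  using mt_z_eqI[OF N, of "\<lambda>_. zs" g A "fixpt g"] fixpt_resolvents[of g] by (auto simp: algebra_simps)

lemma fixpt_in_mt_fix: "0 < g \<Longrightarrow> fixpt g \<in> mt_fix N A g \<theta>"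
  using mt_z_fixpt by (auto simp: mt_fix_def mt_op_def)

lemma vdist_fixpt: "vdist {1..N-1} (fixpt g) (fixpt g') \<le> \<bar>g - g'\<bar> * L2_set (\<lambda>i. norm (\<Sum>j=1..i. u j)) {1..N-1}"
proof -
  have "vdist {1..N-1} (fixpt g) (fixpt g') = L2_set (\<lambda>i. \<bar>g - g'\<bar> * norm (\<Sum>j=1..i. u j)) {1..N-1}"
    unfolding vdist_def fixpt_def by (simp flip: scaleR_diff_left)
  also have "\<dots> = \<bar>g - g'\<bar> * L2_set (\<lambda>i. norm (\<Sum>j=1..i. u j)) {1..N-1}"
    by (simp add: L2_set_right_distrib)
  finally show ?thesis by simp
qed

lemma mt_z_simps:
  fixes x :: "nat \<Rightarrow> 'a" and g :: real
  defines "z \<equiv> mt_z N A g x"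
  shows mt_z_first: "z 1 = resolvent g (A 1) (x 1)"
    and mt_z_middle: "\<And>i. i \<in> {2..N-1} \<Longrightarrow> z i = resolvent g (A i) (x i + z (i-1) - x (i-1))"
    and mt_z_last: "z N = resolvent g (A N) (z 1 + z (N-1) - x (N-1))"
proof -
  have zz: "z i = mt_zz A g x i" if "i \<noteq> N" for i using that by (simp add: z_def mt_z_def)
  show "z 1 = resolvent g (A 1) (x 1)" using N zz[of 1] by simp
  show "z i = resolvent g (A i) (x i + z (i-1) - x (i-1))" if i: "i \<in> {2..N-1}" for i
  proof -
    obtain k where k: "i = Suc (Suc k)" using i by (cases i; cases "i - 1") auto
    show ?thesis using i zz[of i] zz[of "i-1"] unfolding k by (simp add: algebra_simps)
  qed
  have "z N = resolvent g (A N) (mt_zz A g x 1 + mt_zz A g x (N-1) - x (N-1))"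
    by (simp add: z_def mt_z_def)
  then show "z N = resolvent g (A N) (z 1 + z (N-1) - x (N-1))" using N zz[of 1] zz[of "N-1"] by simp
qed

lemma mt_z_dist_fixpt:
  assumes g: "0 < g" and i: "i \<in> {1..N}"
  shows "norm (mt_z N A g x i - zs) \<le> 2 * real N * vdist {1..N-1} x (fixpt g)"
proof -
  define z where "z = mt_z N A g x"
  define e where "e = vdist {1..N-1} x (fixpt g)"
  have dx: "norm (x j - fixpt g j) \<le> e" if "j \<in> {1..N-1}" for j
    unfolding e_def using that by (intro norm_le_vdist) auto
  have step: "norm (resolvent g (A j) p - resolvent g (A j) q) \<le> norm (p1 - q1) + norm (p2 - q2) + norm (p3 - q3)"
    if "j \<in> {1..N}" "p = p1 + p2 - p3" "q = q1 + q2 - q3" for j p q p1 p2 p3 q1 q2 q3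
  proof -
    have "p - q = (p1 - q1) + (p2 - q2) - (p3 - q3)" using that(2,3) by (simp add: algebra_simps)
    then have "norm (resolvent g (A j) p - resolvent g (A j) q) \<le> norm ((p1 - q1) + (p2 - q2) - (p3 - q3))"
      using resolvent_nonexpansive[OF A_max[OF that(1)] g, of p q] by simp
    also have "\<dots> \<le> norm (p1 - q1) + norm (p2 - q2) + norm (p3 - q3)"
      by (meson add_mono norm_triangle_ineq norm_triangle_ineq4 order_trans order_refl)
    finally show ?thesis .
  qed
  have "z 1 = resolvent g (A 1) (x 1)" unfolding z_def by (rule mt_z_first)
  then have z_first: "norm (z 1 - zs) \<le> e"
    using resolvent_nonexpansive[OF A_max g, of 1 "x 1" "fixpt g 1", unfolded fixpt_resolvent_first[OF g]]
      dx[OF one_in] N by simp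
  have e0: "0 \<le> e" unfolding e_def by (rule vdist_nonneg)
  have z_middle: "norm (z j - zs) \<le> 2 * real j * e" if "1 \<le> j" "j \<le> N - 1" for j
    using that
  proof (induction j rule: nat_induct_at_least)
    case base
    then show ?case using z_first e0 by simp
  next
    case (Suc j)
    then have j: "Suc j \<in> {2..N-1}" "j \<in> {1..N-1}" by auto
    have "norm (z (Suc j) - zs)
        \<le> norm (x (Suc j) - fixpt g (Suc j)) + norm (z j - zs) + norm (x j - fixpt g j)"
      using step[of "Suc j"] j unfolding z_def mt_z_middle[OF j(1)]
      by (subst fixpt_resolvent_middle[OF g j(1), symmetric]) auto
    also have "\<dots> \<le> e + 2 * real j * e + e" using dx j Suc by (intro add_mono) auto
    finally show ?case by (simp add: algebra_simps)
  qed
  show ?thesis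
  proof (cases "i = N")
    case True
    have "norm (z N - zs) \<le> norm (z 1 - zs) + norm (z (N-1) - zs) + norm (x (N-1) - fixpt g (N-1))"
      using step[of N] N unfolding z_def mt_z_last
      by (subst fixpt_resolvent_last[OF g, symmetric]) auto
    also have "\<dots> \<le> e + 2 * real (N-1) * e + e"
      using z_first z_middle[of "N-1"] dx[OF last_in] N by (intro add_mono) auto
    also have "\<dots> = 2 * real N * e" using N by (simp add: of_nat_diff algebra_simps)
    finally show ?thesis using True by (simp add: z_def e_def)
  next
    case False
    then have "norm (z i - zs) \<le> 2 * real i * e" using i z_middle by auto
    also have "\<dots> \<le> 2 * real N * e" using i e0 by (intro mult_right_mono) auto
    finally show ?thesis by (simp add: z_def e_def)
  qed
qed

lemma mt_z_decomposition:
  fixes x :: "nat \<Rightarrow> 'a"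
  assumes g: "0 < g"
  defines "z \<equiv> mt_z N A g x"
  obtains v where "\<And>i. i \<in> {1..N} \<Longrightarrow> v i \<in> A i (z i)"
    and "x 1 = z 1 + g *\<^sub>R v 1"
    and "\<And>i. i \<in> {2..N-1} \<Longrightarrow> x i + z (i-1) - x (i-1) = z i + g *\<^sub>R v i"
    and "z 1 + z (N-1) - x (N-1) = z N + g *\<^sub>R v N"
proof -
  define y where "y i = (if i = 1 then x 1 else if i = N then z 1 + z (N-1) - x (N-1)
    else x i + z (i-1) - x (i-1))" for i
  have z_y: "z i = resolvent g (A i) (y i)" if i: "i \<in> {1..N}" for i
  proof -
    consider "i = 1" | "i = N" | "i \<in> {2..N-1}" using i by fastforce
    then show ?thesis
    proof cases
      case 1
      then show ?thesis unfolding z_def y_def 1 mt_z_first[where x=x and g=g] by simp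
    next
      case 2
      then show ?thesis using N unfolding z_def y_def 2 mt_z_last[where x=x and g=g] by simp
    next
      case 3
      then have "i \<noteq> 1" "i \<noteq> N" by auto
      then show ?thesis unfolding z_def y_def mt_z_middle[where x=x and g=g, OF 3] by simp
    qed
  qed
  have "\<exists>v. v \<in> A i (z i) \<and> y i = z i + g *\<^sub>R v" if "i \<in> {1..N}" for i
    using resolvent_decomposition[OF A_max[OF that] g, of "y i"] z_y[OF that] by auto
  then obtain v where v: "\<And>i. i \<in> {1..N} \<Longrightarrow> v i \<in> A i (z i) \<and> y i = z i + g *\<^sub>R v i" by metis
  show thesis
  proof (rule that)
    show "x 1 = z 1 + g *\<^sub>R v 1" using v[of 1] N by (simp add: y_def)
    show "x i + z (i-1) - x (i-1) = z i + g *\<^sub>R v i" if i: "i \<in> {2..N-1}" for i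
    proof -
      have "i \<in> {1..N}" "i \<noteq> 1" "i \<noteq> N" using i by auto
      then show ?thesis using v[of i] by (simp add: y_def)
    qed
    show "z 1 + z (N-1) - x (N-1) = z N + g *\<^sub>R v N" using v[of N] N by (simp add: y_def)
  qed (use v in blast)
qed

lemma mt_step_differences:
  fixes x :: "nat \<Rightarrow> 'a"
  assumes a: "0 < a" "a \<le> g" "g \<le> b"
  defines "z \<equiv> mt_z N A g x"
  obtains c where "\<And>i. i \<in> {1..N-1} \<Longrightarrow> x i - fixpt g i = (z i - zs) + (\<Sum>j=1..i. c j)"
    and "(z 1 - zs) - (z N - zs) = (\<Sum>j=1..N. c j)"
    and "\<And>i. i \<in> {1..N} \<Longrightarrow> 0 \<le> inner (z i - zs) (c i)"
    and "\<And>i. i \<in> {1..N-1} \<Longrightarrow> norm (c i) \<le> (b * L) * norm (z i - zs)"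
    and "(a * \<mu>) * (norm (z N - zs))\<^sup>2 \<le> inner (z N - zs) (c N)
      \<or> (\<forall>i\<in>{1..N-1}. (a * \<mu>) * (norm (z i - zs))\<^sup>2 \<le> inner (z i - zs) (c i))"
proof -
  have g: "0 < g" using a by simp
  obtain v where v: "\<And>i. i \<in> {1..N} \<Longrightarrow> v i \<in> A i (z i)"
    and first: "x 1 = z 1 + g *\<^sub>R v 1"
    and middle: "\<And>i. i \<in> {2..N-1} \<Longrightarrow> x i + z (i-1) - x (i-1) = z i + g *\<^sub>R v i"
    and last: "z 1 + z (N-1) - x (N-1) = z N + g *\<^sub>R v N"
    using mt_z_decomposition[OF g, of x] unfolding z_def by blast
  define c where "c i = g *\<^sub>R (v i - u i)" for i
  have first': "x 1 - fixpt g 1 = (z 1 - zs) + c 1"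
    using first unfolding fixpt_first by (simp add: c_def algebra_simps)
  have middle': "(x i - fixpt g i) + (z (i-1) - zs) - (x (i-1) - fixpt g (i-1)) = (z i - zs) + c i"
    if "i \<in> {2..N-1}" for i
    using middle[OF that] fixpt_middle[OF that, of g] by (simp add: c_def algebra_simps)
  have last': "(z 1 - zs) + (z (N-1) - zs) - (x (N-1) - fixpt g (N-1)) = (z N - zs) + c N"
    using last fixpt_last[of g] by (simp add: c_def algebra_simps)
  note cum = mt_differences_cumulative[OF N first' middle' last']
  have mono: "0 \<le> inner (z i - zs) (v i - u i)" if "i \<in> {1..N}" for i
    using monotone_opD[OF A_mono[OF that] v[OF that] u_in[OF that]] .
  have sv: "v i = F i (z i)" "u i = F i zs" if "i \<in> {1..N-1}" for i
    using v[of i] u_F[OF that] that A_sv[OF that] by (auto simp: sv_def)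
  have scale: "(a * \<mu>) * (norm (z i - zs))\<^sup>2 \<le> inner (z i - zs) (c i)"
    if "\<mu> * (norm (z i - zs))\<^sup>2 \<le> inner (z i - zs) (v i - u i)" for i
  proof -
    have "(a * \<mu>) * (norm (z i - zs))\<^sup>2 \<le> g * (\<mu> * (norm (z i - zs))\<^sup>2)"
      using a \<mu> by (simp add: mult.assoc mult_right_mono)
    also have "\<dots> \<le> g * inner (z i - zs) (v i - u i)" using that g by simp
    finally show ?thesis by (simp add: c_def)
  qed
  show thesis
  proof (rule that)
    show "x i - fixpt g i = (z i - zs) + (\<Sum>j=1..i. c j)" if "i \<in> {1..N-1}" for i
      using cum(1) that by blast
    show "(z 1 - zs) - (z N - zs) = (\<Sum>j=1..N. c j)" using cum(2) by blast
    show "0 \<le> inner (z i - zs) (c i)" if "i \<in> {1..N}" for i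
      using mono[OF that] g by (simp add: c_def)
    show "norm (c i) \<le> (b * L) * norm (z i - zs)" if i: "i \<in> {1..N-1}" for i
    proof -
      have "norm (c i) = g * norm (F i (z i) - F i zs)" using g sv[OF i] by (simp add: c_def)
      also have "\<dots> \<le> g * (L * norm (z i - zs))"
        using lipschitz_onD[OF F_lip[OF i], of "z i" zs] g by (simp add: dist_norm)
      also have "\<dots> \<le> b * (L * norm (z i - zs))"
        using a L_nonneg by (intro mult_right_mono) auto
      finally show ?thesis by simp
    qed
    show "(a * \<mu>) * (norm (z N - zs))\<^sup>2 \<le> inner (z N - zs) (c N)
      \<or> (\<forall>i\<in>{1..N-1}. (a * \<mu>) * (norm (z i - zs))\<^sup>2 \<le> inner (z i - zs) (c i))"
      using strong
    proof
      assume sB: "strongly_monotone_op \<mu> B"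
      have "v N \<in> B (z N)" using v[of N] N by (simp add: A_last)
      then show ?thesis using scale[OF strongly_monotone_opD[OF sB _ u_last]] by blast
    next
      assume sF: "\<forall>i\<in>{1..N-1}. strongly_monotone_op \<mu> (sv (F i))"
      have "(a * \<mu>) * (norm (z i - zs))\<^sup>2 \<le> inner (z i - zs) (c i)" if i: "i \<in> {1..N-1}" for i
      proof (rule scale)
        have iN: "i \<in> {1..N}" using i by auto
        have "v i \<in> sv (F i) (z i)" "u i \<in> sv (F i) zs" using v[OF iN] u_in[OF iN] A_sv[OF i] by auto
        then show "\<mu> * (norm (z i - zs))\<^sup>2 \<le> inner (z i - zs) (v i - u i)"
          using sF i by (blast intro: strongly_monotone_opD)
      qed
      then show ?thesis by blast
    qed
  qed
qed

lemma mt_op_contraction: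
  assumes \<theta>: "0 < \<theta>" "\<theta> < 1" and a: "0 < a" "a \<le> g" "g \<le> b"
  shows "vdist {1..N-1} (mt_op N A g \<theta> x) (fixpt g)
    \<le> sqrt (1 - mt_delta N \<theta> (b * L) (a * \<mu>)) * vdist {1..N-1} x (fixpt g)"
proof -
  define z where "z = mt_z N A g x"
  obtain c where c: "\<And>i. i \<in> {1..N-1} \<Longrightarrow> x i - fixpt g i = (z i - zs) + (\<Sum>j=1..i. c j)"
    "(z 1 - zs) - (z N - zs) = (\<Sum>j=1..N. c j)"
    "\<And>i. i \<in> {1..N} \<Longrightarrow> 0 \<le> inner (z i - zs) (c i)"
    "\<And>i. i \<in> {1..N-1} \<Longrightarrow> norm (c i) \<le> (b * L) * norm (z i - zs)"
    "(a * \<mu>) * (norm (z N - zs))\<^sup>2 \<le> inner (z N - zs) (c N)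
      \<or> (\<forall>i\<in>{1..N-1}. (a * \<mu>) * (norm (z i - zs))\<^sup>2 \<le> inner (z i - zs) (c i))"
    using mt_step_differences[OF a, of x] unfolding z_def by blast
  have K: "0 \<le> b * L" using a L_nonneg by simp
  have m: "0 < a * \<mu>" using a \<mu> by simp
  have op_eq: "mt_op N A g \<theta> x i - fixpt g i = (x i - fixpt g i) + \<theta> *\<^sub>R ((z (i+1) - zs) - (z i - zs))"
    if "i \<in> {1..N-1}" for i
    using that by (simp add: mt_op_def z_def algebra_simps)
  have "(vdist {1..N-1} (mt_op N A g \<theta> x) (fixpt g))\<^sup>2
      = (\<Sum>i=1..N-1. (norm ((x i - fixpt g i) + \<theta> *\<^sub>R ((z (i+1) - zs) - (z i - zs))))\<^sup>2)"
    unfolding vdist_square by (intro sum.cong refl) (simp only: op_eq)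
  also have "\<dots> \<le> (1 - mt_delta N \<theta> (b * L) (a * \<mu>)) * (\<Sum>i=1..N-1. (norm (x i - fixpt g i))\<^sup>2)"
    by (rule mt_contraction[where dx = "\<lambda>i. x i - fixpt g i" and dz = "\<lambda>i. z i - zs",
          OF N \<theta> K m c])
  also have "\<dots> = (sqrt (1 - mt_delta N \<theta> (b * L) (a * \<mu>)) * vdist {1..N-1} x (fixpt g))\<^sup>2"
    using mt_delta_bounds(2)[OF N \<theta> K m] by (simp add: power_mult_distrib vdist_square)
  finally have "(vdist {1..N-1} (mt_op N A g \<theta> x) (fixpt g))\<^sup>2
      \<le> (sqrt (1 - mt_delta N \<theta> (b * L) (a * \<mu>)) * vdist {1..N-1} x (fixpt g))\<^sup>2" .
  then show ?thesis
    by (rule power2_le_imp_le) (use mt_delta_bounds(2)[OF N \<theta> K m] in \<open>simp add: vdist_nonneg\<close>)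
qed

lemma relocation:
  assumes g: "0 < g" "0 < g'"
    and first: "x' 1 = (g' / g) *\<^sub>R w 1 + (1 - g' / g) *\<^sub>R resolvent g (A 1) (w 1)"
    and rest: "\<And>i. i \<in> {2..N-1} \<Longrightarrow> x' i = (g' / g) *\<^sub>R (w i - w 1) + x' 1"
  shows relocation_resolvent: "resolvent g' (A 1) (x' 1) = resolvent g (A 1) (w 1)"
    and relocation_dist:
      "vdist {1..N-1} x' (fixpt g') \<le> (1 + real (N+1) * \<bar>g' / g - 1\<bar>) * vdist {1..N-1} w (fixpt g)"
proof -
  define r where "r = g' / g"
  define p where "p = resolvent g (A 1) (w 1)"
  define e where "e = vdist {1..N-1} w (fixpt g)"
  have r: "r * g = g'" unfolding r_def using g by simp
  have w1: "w 1 = p + g *\<^sub>R F 1 p" unfolding p_def by (rule resolvent_A_sv[OF one_in g(1)])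
  have x'1_w: "x' 1 = r *\<^sub>R w 1 + (1 - r) *\<^sub>R p" using first unfolding r_def[symmetric] p_def[symmetric] .
  also have "\<dots> = p + (r * g) *\<^sub>R F 1 p" unfolding w1 by (simp add: algebra_simps)
  finally have x'1: "x' 1 = p + g' *\<^sub>R F 1 p" unfolding r .
  have "F 1 p \<in> A 1 p" using A_sv[OF one_in] by (simp add: sv_def)
  then show "resolvent g' (A 1) (x' 1) = p" unfolding x'1 using N by (intro resolvent_A_eqI[OF _ g(2)]) auto
  have "norm (p - zs) \<le> norm (w 1 - fixpt g 1)"
    using resolvent_nonexpansive[OF A_max g(1), of 1 "w 1" "fixpt g 1"] N
    unfolding p_def fixpt_resolvent_first[OF g(1)] by simp
  also have "\<dots> \<le> e" unfolding e_def using N by (intro norm_le_vdist) auto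
  finally have p: "norm (p - zs) \<le> e" .
  have "x' i - fixpt g' i = (w i - fixpt g i) + (r - 1) *\<^sub>R ((w i - fixpt g i) - (p - zs))"
    if i: "i \<in> {1..N-1}" for i
  proof -
    have xi: "x' i = r *\<^sub>R w i + (1 - r) *\<^sub>R p"
    proof (cases "i = 1")
      case False
      then have "x' i = r *\<^sub>R (w i - w 1) + x' 1" using i rest[of i] unfolding r_def by simp
      then show ?thesis unfolding x'1_w by (simp add: algebra_simps)
    qed (use x'1_w in simp)
    have fi: "fixpt g' i = r *\<^sub>R fixpt g i + (1 - r) *\<^sub>R zs"
      unfolding fixpt_def by (simp add: algebra_simps flip: r)
    show ?thesis unfolding xi fi by (simp add: algebra_simps)
  qed
  then have "vdist {1..N-1} x' (fixpt g')
      \<le> L2_set (\<lambda>i. (1 + \<bar>r - 1\<bar>) * norm (w i - fixpt g i) + \<bar>r - 1\<bar> * e) {1..N-1}"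
    unfolding vdist_def
  proof (intro L2_set_mono)
    fix i assume i: "i \<in> {1..N-1}"
    define d where "d = w i - fixpt g i"
    have "norm (x' i - fixpt g' i) \<le> norm d + norm ((r - 1) *\<^sub>R (d - (p - zs)))"
      unfolding \<open>i \<in> {1..N-1} \<Longrightarrow> _\<close>[OF i] d_def[symmetric] by (rule norm_triangle_ineq)
    also have "norm ((r - 1) *\<^sub>R (d - (p - zs))) = \<bar>r - 1\<bar> * norm (d - (p - zs))" by simp
    also have "\<dots> \<le> \<bar>r - 1\<bar> * (norm d + e)"
      using norm_triangle_ineq4[of d "p - zs"] p by (intro mult_left_mono) auto
    finally show "norm (x' i - fixpt g' i) \<le> (1 + \<bar>r - 1\<bar>) * norm (w i - fixpt g i) + \<bar>r - 1\<bar> * e"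
      unfolding d_def by (simp add: algebra_simps)
  qed simp
  also have "\<dots> \<le> (1 + \<bar>r - 1\<bar>) * e + sqrt (real (N-1)) * (\<bar>r - 1\<bar> * e)"
    using L2_set_triangle_ineq[of "\<lambda>i. (1 + \<bar>r - 1\<bar>) * norm (w i - fixpt g i)" "\<lambda>i. \<bar>r - 1\<bar> * e" "{1..N-1}"]
    by (simp add: L2_set_right_distrib L2_set_constant e_def vdist_def vdist_nonneg)
  also have "\<dots> \<le> (1 + real (N+1) * \<bar>r - 1\<bar>) * e"
  proof -
    have "N - 1 \<le> N * N" using le_square[of N] by linarith
    then have "real (N - 1) \<le> real (N * N)" by (simp only: of_nat_le_iff)
    then have "real (N - 1) \<le> (real N)\<^sup>2" by (simp add: power2_eq_square)
    from real_sqrt_le_mono[OF this] have "sqrt (real (N-1)) \<le> real N" by simp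
    then have "sqrt (real (N-1)) * (\<bar>r - 1\<bar> * e) \<le> real N * (\<bar>r - 1\<bar> * e)"
      unfolding e_def by (intro mult_right_mono) (auto simp: vdist_nonneg)
    then show ?thesis by (simp add: algebra_simps)
  qed
  finally show "vdist {1..N-1} x' (fixpt g') \<le> (1 + real (N+1) * \<bar>g' / g - 1\<bar>) * vdist {1..N-1} w (fixpt g)"
    unfolding r_def e_def .
qed

end

lemma perturbed_geometric_bound:
  fixes e \<beta> :: "nat \<Rightarrow> real"
  assumes step: "\<And>n. e (Suc n) \<le> (1 + \<beta> n) * \<rho> * e n"
    and e: "\<And>n. 0 \<le> e n" and \<beta>: "\<And>n. 0 \<le> \<beta> n" "\<And>n. \<beta> n \<le> C * q ^ n"
    and \<rho>: "0 \<le> \<rho>" and q: "0 \<le> q" "q < 1"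
  shows "e n \<le> e 0 * exp (C / (1 - q)) * \<rho> ^ n"
proof -
  have prod: "e n \<le> e 0 * \<rho> ^ n * exp (\<Sum>k<n. \<beta> k)" for n
  proof (induction n)
    case (Suc n)
    have "e (Suc n) \<le> (1 + \<beta> n) * \<rho> * e n" by (rule step)
    also have "\<dots> \<le> exp (\<beta> n) * \<rho> * e n"
      using e \<rho> by (intro mult_right_mono) (auto simp: exp_ge_add_one_self)
    also have "\<dots> \<le> exp (\<beta> n) * \<rho> * (e 0 * \<rho> ^ n * exp (\<Sum>k<n. \<beta> k))"
      using Suc.IH \<rho> by (intro mult_left_mono) auto
    also have "\<dots> = e 0 * \<rho> ^ Suc n * exp (\<Sum>k<Suc n. \<beta> k)"
      by (simp add: exp_add mult_ac)
    finally show ?case .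
  qed simp
  have "(\<Sum>k<n. \<beta> k) \<le> C * (\<Sum>k<n. q ^ k)"
    using \<beta>(2) by (simp add: sum_distrib_left sum_mono)
  also have "(\<Sum>k<n. q ^ k) = (1 - q ^ n) / (1 - q)" using q sum_gp_strict[of q n] by simp
  also have "C * \<dots> \<le> C / (1 - q)"
  proof -
    have "0 \<le> C" using \<beta>(1)[of 0] \<beta>(2)[of 0] by simp
    moreover have "(1 - q ^ n) / (1 - q) \<le> 1 / (1 - q)" using q by (intro divide_right_mono) auto
    ultimately show ?thesis using mult_left_mono by fastforce
  qed
  finally have "exp (\<Sum>k<n. \<beta> k) \<le> exp (C / (1 - q))" by simp
  then have "e 0 * \<rho> ^ n * exp (\<Sum>k<n. \<beta> k) \<le> e 0 * \<rho> ^ n * exp (C / (1 - q))"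
    using e \<rho> by (intro mult_left_mono) auto
  then show ?thesis using prod[of n] by (simp add: mult_ac)
qed

lemma rlinear_of_two_rates:
  fixes f :: "nat \<Rightarrow> real"
  assumes f: "\<And>n. f n \<le> C1 * r1 ^ n + C2 * r2 ^ n" and C: "0 \<le> C1" "0 \<le> C2"
    and r: "0 < r1" "r1 < 1" "0 < r2" "r2 < 1"
  shows "\<exists>C r. 0 \<le> C \<and> 0 < r \<and> r < 1 \<and> (\<forall>n. f n \<le> C * r ^ n)"
proof (intro exI conjI allI)
  fix n
  have "r1 ^ n \<le> (max r1 r2) ^ n" "r2 ^ n \<le> (max r1 r2) ^ n" using r by (auto intro!: power_mono)
  then have "C1 * r1 ^ n + C2 * r2 ^ n \<le> C1 * (max r1 r2) ^ n + C2 * (max r1 r2) ^ n"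
    using C by (intro add_mono mult_left_mono) auto
  then show "f n \<le> (C1 + C2) * (max r1 r2) ^ n" using f[of n] by (simp add: algebra_simps)
qed (use C r in auto)

lemma rlinear_real_ratio:
  assumes conv: "rlinear_real \<gamma> l" and a: "0 < a" "\<And>n. a \<le> \<gamma> n"
  obtains C q where "0 \<le> C" "0 < q" "q < 1" "\<And>n. \<bar>\<gamma> (Suc n) / \<gamma> n - 1\<bar> \<le> C * q ^ n"
proof -
  obtain C q where C: "0 \<le> C" "0 < q" "q < 1" "\<And>n. \<bar>\<gamma> n - l\<bar> \<le> C * q ^ n"
    using conv unfolding rlinear_real_def by blast
  have "\<bar>\<gamma> (Suc n) / \<gamma> n - 1\<bar> \<le> (2 * C / a) * q ^ n" for n
  proof -
    have \<gamma>: "0 < \<gamma> n" using a(1) a(2)[of n] by linarith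
    have "\<bar>\<gamma> (Suc n) - \<gamma> n\<bar> \<le> \<bar>\<gamma> (Suc n) - l\<bar> + \<bar>\<gamma> n - l\<bar>" by simp
    also have "\<dots> \<le> C * q ^ Suc n + C * q ^ n" by (rule add_mono[OF C(4) C(4)])
    also have "C * q ^ Suc n \<le> C * q ^ n" using C by (intro mult_left_mono power_decreasing) auto
    finally have "\<bar>\<gamma> (Suc n) - \<gamma> n\<bar> \<le> 2 * C * q ^ n" by simp
    moreover have "\<bar>\<gamma> (Suc n) / \<gamma> n - 1\<bar> = \<bar>\<gamma> (Suc n) - \<gamma> n\<bar> / \<gamma> n"
      using \<gamma> by (simp add: field_simps)
    ultimately have "\<bar>\<gamma> (Suc n) / \<gamma> n - 1\<bar> \<le> 2 * C * q ^ n / \<gamma> n"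
      using \<gamma> by (simp add: divide_right_mono)
    also have "\<dots> \<le> 2 * C * q ^ n / a" using a C \<gamma> by (intro divide_left_mono) auto
    finally show ?thesis by simp
  qed
  then show thesis using that[of "2 * C / a" q] C a by simp
qed

locale relocated_mt = mt_problem +
  fixes \<theta> a b gs :: real and \<gamma> :: "nat \<Rightarrow> real" and x w z :: "nat \<Rightarrow> nat \<Rightarrow> 'a"
  assumes \<theta>: "0 < \<theta>" "\<theta> < 1"
    and a: "0 < a"
    and \<gamma>_in: "\<And>n. \<gamma> n \<in> {a..b}" and gs_in: "gs \<in> {a..b}"
    and \<gamma>_conv: "rlinear_real \<gamma> gs"
    and init: "z 0 1 = resolvent (\<gamma> 0) (A 1) (x 0 1)"
    and z_middle: "\<And>n i. i \<in> {2..N-1} \<Longrightarrow> z n i = resolvent (\<gamma> n) (A i) (x n i + z n (i-1) - x n (i-1))"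
    and z_last: "\<And>n. z n N = resolvent (\<gamma> n) (A N) (z n 1 + z n (N-1) - x n (N-1))"
    and w_def: "\<And>n i. i \<in> {1..N-1} \<Longrightarrow> w n i = x n i + \<theta> *\<^sub>R (z n (i+1) - z n i)"
    and z_next: "\<And>n. z (Suc n) 1 = resolvent (\<gamma> n) (A 1) (w n 1)"
    and x_next_first:
      "\<And>n. x (Suc n) 1 = (\<gamma> (Suc n) / \<gamma> n) *\<^sub>R w n 1 + (1 - \<gamma> (Suc n) / \<gamma> n) *\<^sub>R z (Suc n) 1"
    and x_next: "\<And>n i. i \<in> {2..N-1} \<Longrightarrow> x (Suc n) i = (\<gamma> (Suc n) / \<gamma> n) *\<^sub>R (w n i - w n 1) + x (Suc n) 1"
begin

definition rate :: real where
  "rate = sqrt (1 - mt_delta N \<theta> (b * L) (a * \<mu>))"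

definition err :: "nat \<Rightarrow> real" where
  "err n = vdist {1..N-1} (x n) (fixpt (\<gamma> n))"

lemma \<gamma>_pos: "0 < \<gamma> n"
  using a \<gamma>_in[of n] by simp

lemma rate: "0 < rate" "rate < 1"
proof -
  have "0 \<le> b * L" using a \<gamma>_in[of 0] L_nonneg by simp
  moreover have "0 < a * \<mu>" using a \<mu> by simp
  ultimately show "0 < rate" "rate < 1"
    using mt_delta_bounds[OF N \<theta>] unfolding rate_def by auto
qed

lemma z_first: "z n 1 = resolvent (\<gamma> n) (A 1) (x n 1)"
proof (cases n)
  case (Suc m)
  show ?thesis
    unfolding Suc z_next
    by (rule relocation_resolvent[OF \<gamma>_pos \<gamma>_pos, symmetric])
      (use x_next_first[of m] x_next[of _ m] z_next[of m] in auto)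
qed (use init in simp)

lemma z_eq_mt_z: "i \<in> {1..N} \<Longrightarrow> z n i = mt_z N A (\<gamma> n) (x n) i"
  using mt_z_eqI[OF N z_first z_middle z_last] .

lemma w_eq_mt_op: "i \<in> {1..N-1} \<Longrightarrow> w n i = mt_op N A (\<gamma> n) \<theta> (x n) i"
proof -
  assume i: "i \<in> {1..N-1}"
  then have "i \<in> {1..N}" "i + 1 \<in> {1..N}" by auto
  then show ?thesis using w_def[OF i] z_eq_mt_z i by (simp add: mt_op_def)
qed

lemma w_err: "vdist {1..N-1} (w n) (fixpt (\<gamma> n)) \<le> rate * err n"
proof -
  have "vdist {1..N-1} (w n) (fixpt (\<gamma> n)) = vdist {1..N-1} (mt_op N A (\<gamma> n) \<theta> (x n)) (fixpt (\<gamma> n))"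
    by (rule vdist_cong[OF w_eq_mt_op])
  also have "\<dots> \<le> rate * err n"
    unfolding rate_def err_def using \<gamma>_in[of n] by (intro mt_op_contraction[OF \<theta> a]) auto
  finally show ?thesis .
qed

lemma err_step: "err (Suc n) \<le> (1 + real (N+1) * \<bar>\<gamma> (Suc n) / \<gamma> n - 1\<bar>) * rate * err n"
proof -
  have "err (Suc n) \<le> (1 + real (N+1) * \<bar>\<gamma> (Suc n) / \<gamma> n - 1\<bar>) * vdist {1..N-1} (w n) (fixpt (\<gamma> n))"
    unfolding err_def
    by (rule relocation_dist[OF \<gamma>_pos \<gamma>_pos]) (use x_next_first[of n] x_next[of _ n] z_next[of n] in auto)
  also have "\<dots> \<le> (1 + real (N+1) * \<bar>\<gamma> (Suc n) / \<gamma> n - 1\<bar>) * (rate * err n)"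
    using w_err by (intro mult_left_mono) auto
  finally show ?thesis by (simp add: mult.assoc)
qed

lemma err_rlinear: "\<exists>M. 0 \<le> M \<and> (\<forall>n. err n \<le> M * rate ^ n)"
proof -
  obtain C q where C: "0 \<le> C" "0 < q" "q < 1" "\<And>n. \<bar>\<gamma> (Suc n) / \<gamma> n - 1\<bar> \<le> C * q ^ n"
    using rlinear_real_ratio[OF \<gamma>_conv a] \<gamma>_in by auto
  have "err n \<le> err 0 * exp (real (N+1) * C / (1 - q)) * rate ^ n" for n
  proof (rule perturbed_geometric_bound)
    show "err (Suc n) \<le> (1 + real (N+1) * \<bar>\<gamma> (Suc n) / \<gamma> n - 1\<bar>) * rate * err n" for n
      by (rule err_step)
    show "real (N+1) * \<bar>\<gamma> (Suc n) / \<gamma> n - 1\<bar> \<le> real (N+1) * C * q ^ n" for n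
      using C(4)[of n] by (simp add: mult.assoc)
  qed (use C rate in \<open>auto simp: err_def vdist_nonneg\<close>)
  moreover have "0 \<le> err 0 * exp (real (N+1) * C / (1 - q))" by (simp add: err_def vdist_nonneg)
  ultimately show ?thesis by blast
qed

lemma fixpt_rlinear: "\<exists>C q. 0 \<le> C \<and> 0 < q \<and> q < 1 \<and> (\<forall>n. vdist {1..N-1} (fixpt (\<gamma> n)) (fixpt gs) \<le> C * q ^ n)"
proof -
  obtain C q where C: "0 \<le> C" "0 < q" "q < 1" "\<And>n. \<bar>\<gamma> n - gs\<bar> \<le> C * q ^ n"
    using \<gamma>_conv unfolding rlinear_real_def by blast
  define U where "U = L2_set (\<lambda>i. norm (\<Sum>j=1..i. u j)) {1..N-1}"
  have "vdist {1..N-1} (fixpt (\<gamma> n)) (fixpt gs) \<le> (C * U) * q ^ n" for n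
  proof -
    have "vdist {1..N-1} (fixpt (\<gamma> n)) (fixpt gs) \<le> \<bar>\<gamma> n - gs\<bar> * U"
      unfolding U_def by (rule vdist_fixpt)
    also have "\<dots> \<le> C * q ^ n * U" using C(4) by (rule mult_right_mono) (simp add: U_def)
    finally show ?thesis by (simp add: mult_ac)
  qed
  moreover have "0 \<le> C * U" using C by (simp add: U_def)
  ultimately show ?thesis using C by blast
qed

lemma x_rlinear: "rlinear_vec {1..N-1} x (fixpt gs)"
proof -
  obtain M where M: "0 \<le> M" "\<And>n. err n \<le> M * rate ^ n" using err_rlinear by blast
  obtain C q where C: "0 \<le> C" "0 < q" "q < 1" "\<And>n. vdist {1..N-1} (fixpt (\<gamma> n)) (fixpt gs) \<le> C * q ^ n"
    using fixpt_rlinear by blast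
  have "vdist {1..N-1} (x n) (fixpt gs) \<le> M * rate ^ n + C * q ^ n" for n
    using vdist_triangle[where I="{1..N-1}" and p="x n" and q="fixpt (\<gamma> n)" and r="fixpt gs"]
      M(2)[of n] C(4)[of n] unfolding err_def by linarith
  from rlinear_of_two_rates[OF this M(1) C(1) rate C(2,3)] show ?thesis
    unfolding rlinear_vec_iff_vdist .
qed

lemma w_rlinear: "rlinear_vec {1..N-1} w (fixpt gs)"
proof -
  obtain M where M: "0 \<le> M" "\<And>n. err n \<le> M * rate ^ n" using err_rlinear by blast
  obtain C q where C: "0 \<le> C" "0 < q" "q < 1" "\<And>n. vdist {1..N-1} (fixpt (\<gamma> n)) (fixpt gs) \<le> C * q ^ n"
    using fixpt_rlinear by blast
  have contr: "rate * err n \<le> 1 * err n" for n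
    using rate by (intro mult_right_mono) (auto simp: err_def vdist_nonneg)
  have "vdist {1..N-1} (w n) (fixpt gs) \<le> M * rate ^ n + C * q ^ n" for n
    using vdist_triangle[where I="{1..N-1}" and p="w n" and q="fixpt (\<gamma> n)" and r="fixpt gs"]
      w_err[of n] contr[of n] M(2)[of n] C(4)[of n] by linarith
  from rlinear_of_two_rates[OF this M(1) C(1) rate C(2,3)] show ?thesis
    unfolding rlinear_vec_iff_vdist .
qed

lemma z_rlinear: "rlinear_vec {1..N} z (\<lambda>_. zs)"
proof -
  obtain M where M: "0 \<le> M" "\<And>n. err n \<le> M * rate ^ n" using err_rlinear by blast
  have "vdist {1..N} (z n) (\<lambda>_. zs) \<le> (sqrt (real N) * (2 * real N) * M) * rate ^ n + 0 * rate ^ n" for n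
  proof -
    have "norm (z n i - zs) \<le> 2 * real N * err n" if "i \<in> {1..N}" for i
      unfolding z_eq_mt_z[OF that] err_def by (rule mt_z_dist_fixpt[OF \<gamma>_pos that])
    then have "vdist {1..N} (z n) (\<lambda>_. zs) \<le> sqrt (real N) * (2 * real N * err n)"
      using vdist_le_card[of "{1..N}" "z n" "\<lambda>_. zs"] by simp
    also have "\<dots> \<le> sqrt (real N) * (2 * real N * (M * rate ^ n))"
      using M(2)[of n] by (intro mult_left_mono) auto
    finally show ?thesis by (simp add: mult_ac)
  qed
  from rlinear_of_two_rates[OF this _ _ rate rate] M(1) rate show ?thesis
    unfolding rlinear_vec_iff_vdist by simp
qed

end

theorem corollary5p5:
  fixes F :: "nat \<Rightarrow> 'a::{real_inner, complete_space} \<Rightarrow> 'a"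
    and B :: "'a \<Rightarrow> 'a set"
    and N :: nat and \<theta> L \<mu> a b gs :: real
    and \<gamma> :: "nat \<Rightarrow> real"
    and x w z :: "nat \<Rightarrow> nat \<Rightarrow> 'a"
  defines "A \<equiv> ops N F B"
  assumes N2: "N \<ge> 2"
    and \<theta>: "0 < \<theta>" "\<theta> < 1"
    and \<Gamma>: "0 < a" "a \<le> b"
    and \<mu>: "\<mu> > 0"
    and hyp: "((\<forall>i\<in>{1..N-1}. monotone_op (sv (F i)) \<and> L-lipschitz_on UNIV (F i))
                 \<and> maximally_monotone_op B \<and> strongly_monotone_op \<mu> B)
            \<or> ((\<forall>i\<in>{1..N-1}. maximally_monotone_op (sv (F i)) \<and> strongly_monotone_op \<mu> (sv (F i))
                     \<and> L-lipschitz_on UNIV (F i))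
                 \<and> maximally_monotone_op B)"
    and zer_ne: "zer (opsum N A) \<noteq> {}"
    and \<gamma>_in: "\<forall>n. \<gamma> n \<in> {a..b}"
    and gs_in: "gs \<in> {a..b}"
    and \<gamma>_conv: "rlinear_real \<gamma> gs"
    and init: "z 0 1 = resolvent (\<gamma> 0) (A 1) (x 0 1)"
    and zi: "\<forall>n. \<forall>i\<in>{2..N-1}. z n i = resolvent (\<gamma> n) (A i) (x n i + z n (i - 1) - x n (i - 1))"
    and zN: "\<forall>n. z n N = resolvent (\<gamma> n) (A N) (z n 1 + z n (N - 1) - x n (N - 1))"
    and wn: "\<forall>n. \<forall>i\<in>{1..N-1}. w n i = x n i + \<theta> *\<^sub>R (z n (i + 1) - z n i)"
    and z1: "\<forall>n. z (Suc n) 1 = resolvent (\<gamma> n) (A 1) (w n 1)"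
    and x1: "\<forall>n. x (Suc n) 1 = (\<gamma> (Suc n) / \<gamma> n) *\<^sub>R w n 1 + (1 - \<gamma> (Suc n) / \<gamma> n) *\<^sub>R z (Suc n) 1"
    and xi: "\<forall>n. \<forall>i\<in>{2..N-1}. x (Suc n) i = (\<gamma> (Suc n) / \<gamma> n) *\<^sub>R (w n i - w n 1) + x (Suc n) 1"
  shows "\<exists>xs :: nat \<Rightarrow> 'a.
            xs \<in> mt_fix N A gs \<theta>
          \<and> rlinear_vec {1..N-1} x xs \<and> rlinear_vec {1..N-1} w xs
          \<and> rlinear_vec {1..N} z (\<lambda>_. resolvent gs (A 1) (xs 1))
          \<and> resolvent gs (A 1) (xs 1) \<in> zer (opsum N A)"
proof -
  obtain zs where zs: "zs \<in> zer (opsum N A)" using zer_ne by blast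
  then obtain u where u: "\<forall>i\<in>{1..N}. u i \<in> A i zs" "(\<Sum>i=1..N. u i) = 0"
    unfolding zer_def opsum_def by auto
  have F: "maximally_monotone_op (sv (F i)) \<and> L-lipschitz_on UNIV (F i)" if i: "i \<in> {1..N-1}" for i
    using hyp
  proof
    assume "(\<forall>i\<in>{1..N-1}. monotone_op (sv (F i)) \<and> L-lipschitz_on UNIV (F i))
      \<and> maximally_monotone_op B \<and> strongly_monotone_op \<mu> B"
    then have "monotone_op (sv (F i))" "L-lipschitz_on UNIV (F i)" using i by auto
    then show ?thesis using maximally_monotone_op_sv lipschitz_on_continuous_on by blast
  qed (use i in auto)
  have B: "maximally_monotone_op B"
    and strong: "strongly_monotone_op \<mu> B \<or> (\<forall>i\<in>{1..N-1}. strongly_monotone_op \<mu> (sv (F i)))"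
    using hyp by auto
  interpret relocated_mt N F B L \<mu> zs u \<theta> a b gs \<gamma> x w z
    using N2 F B strong \<mu> u \<theta> \<Gamma> \<gamma>_in gs_in \<gamma>_conv init zi zN wn z1 x1 xi
    unfolding A_def by unfold_locales auto
  have "resolvent gs (A 1) (fixpt gs 1) = zs"
    using fixpt_resolvent_first \<Gamma> gs_in unfolding A_def by auto
  then show ?thesis
    using fixpt_in_mt_fix x_rlinear w_rlinear z_rlinear zs \<Gamma> gs_in unfolding A_def
    by (intro exI[of _ "fixpt gs"]) auto
qed

end
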